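(* For every separable complex Hilbert space $\mathcal{H}$ and every finite $p>0$, $\mathbf{C}_1(\mathcal{H})\subseteq\mathbf{C}_p(\mathcal{H})$.
   Context: Observables are self-adjoint operators on $\mathcal{H}$. For an operator $A$ on $\mathcal{H}$, $A^T$ is the operator on the dual $\mathcal{H}^*$ with $(A^T\eta)(\varphi)=\eta(A\varphi)$. For a finite collection $\mathcal{A}=\{A_1,\dots,A_K\}$ of observables and $0<p<\infty$, $C_{\mathcal{A},p}=\sum_{k=1}^K|A_k\otimes I^T-I\otimes A_k^T|^p$, an operator on $\mathcal{H}\otimes\mathcal{H}^*$. $\mathbf{C}_p(\mathcal{H})=\{C_{\mathcal{A},p}:\ \mathcal{A}\text{ a finite collection of observables on }\mathcal{H}\text{, each with finite spectrum}\}$. *)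

theory Defs
  imports "HOL-Analysis.Analysis" "HOL-Computational_Algebra.Polynomial" "HOL-Library.FuncSet"
begin

text \<open>A complex Hilbert space is given by a carrier type 'a with its additive group,
  a complex scalar multiplication sc and an inner product ip (linear in the second
  argument, conjugate-linear in the first).\<close>

definition hnorm :: "('a \<Rightarrow> 'a \<Rightarrow> complex) \<Rightarrow> 'a \<Rightarrow> real" where
  "hnorm ip x = sqrt (Re (ip x x))"

definition is_complex_hilbert ::
  "(complex \<Rightarrow> 'a::ab_group_add \<Rightarrow> 'a) \<Rightarrow> ('a \<Rightarrow> 'a \<Rightarrow> complex) \<Rightarrow> bool" where
  "is_complex_hilbert sc ip \<longleftrightarrow>
     (\<forall>x. sc 1 x = x) \<and>
     (\<forall>a b x. sc a (sc b x) = sc (a * b) x) \<and>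
     (\<forall>a x y. sc a (x + y) = sc a x + sc a y) \<and>
     (\<forall>a b x. sc (a + b) x = sc a x + sc b x) \<and>
     (\<forall>x y. ip x y = cnj (ip y x)) \<and>
     (\<forall>x y z. ip x (y + z) = ip x y + ip x z) \<and>
     (\<forall>a x y. ip x (sc a y) = a * ip x y) \<and>
     (\<forall>x. 0 \<le> Re (ip x x)) \<and>
     (\<forall>x. ip x x = 0 \<longrightarrow> x = 0) \<and>
     (\<forall>f :: nat \<Rightarrow> 'a.
        (\<forall>e>0. \<exists>N. \<forall>m\<ge>N. \<forall>n\<ge>N. hnorm ip (f m - f n) < e) \<longrightarrow>
        (\<exists>l. (\<lambda>n. hnorm ip (f n - l)) \<longlonglongrightarrow> 0))"

definition is_separable :: "('a::ab_group_add \<Rightarrow> 'a \<Rightarrow> complex) \<Rightarrow> bool" where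
  "is_separable ip \<longleftrightarrow>
     (\<exists>D. countable D \<and> (\<forall>x e. e > 0 \<longrightarrow> (\<exists>d\<in>D. hnorm ip (x - d) < e)))"

definition is_clinear :: "(complex \<Rightarrow> 'a::ab_group_add \<Rightarrow> 'a) \<Rightarrow> ('a \<Rightarrow> 'a) \<Rightarrow> bool" where
  "is_clinear sc A \<longleftrightarrow> (\<forall>x y. A (x + y) = A x + A y) \<and> (\<forall>c x. A (sc c x) = sc c (A x))"

definition is_bounded_op :: "('a \<Rightarrow> 'a \<Rightarrow> complex) \<Rightarrow> ('a \<Rightarrow> 'a) \<Rightarrow> bool" where
  "is_bounded_op ip A \<longleftrightarrow> (\<exists>K. \<forall>x. hnorm ip (A x) \<le> K * hnorm ip x)"

definition op_spectrum :: "(complex \<Rightarrow> 'a::ab_group_add \<Rightarrow> 'a) \<Rightarrow> ('a \<Rightarrow> 'a) \<Rightarrow> complex set" where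
  "op_spectrum sc A = {lam. \<not> bij (\<lambda>x. A x - sc lam x)}"

definition is_fs_observable ::
  "(complex \<Rightarrow> 'a::ab_group_add \<Rightarrow> 'a) \<Rightarrow> ('a \<Rightarrow> 'a \<Rightarrow> complex) \<Rightarrow> ('a \<Rightarrow> 'a) \<Rightarrow> bool" where
  "is_fs_observable sc ip A \<longleftrightarrow>
     is_clinear sc A \<and> is_bounded_op ip A \<and> (\<forall>x y. ip (A x) y = ip x (A y)) \<and>
     finite (op_spectrum sc A)"

definition is_cfunctional ::
  "(complex \<Rightarrow> 'a::ab_group_add \<Rightarrow> 'a) \<Rightarrow> ('a \<Rightarrow> 'a \<Rightarrow> complex) \<Rightarrow> ('a \<Rightarrow> complex) \<Rightarrow> bool" where
  "is_cfunctional sc ip \<eta> \<longleftrightarrow>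
     (\<forall>x y. \<eta> (x + y) = \<eta> x + \<eta> y) \<and> (\<forall>c x. \<eta> (sc c x) = c * \<eta> x) \<and>
     (\<exists>K. \<forall>x. cmod (\<eta> x) \<le> K * hnorm ip x)"

text \<open>The (algebraic) tensor product H \<otimes> H*: the elementary tensor phi \<otimes> eta is
  identified with the rank-one map x \<mapsto> eta(x) phi, so H \<otimes> H* is realised as the
  space of finite sums of such maps (a dense subspace of the Hilbert tensor product).\<close>
definition tens_space ::
  "(complex \<Rightarrow> 'a::ab_group_add \<Rightarrow> 'a) \<Rightarrow> ('a \<Rightarrow> 'a \<Rightarrow> complex) \<Rightarrow> ('a \<Rightarrow> 'a) set" where
  "tens_space sc ip =
     {X. \<exists>ps :: ('a \<times> ('a \<Rightarrow> complex)) list.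
           (\<forall>(\<phi>, \<eta>)\<in>set ps. is_cfunctional sc ip \<eta>) \<and>
           X = (\<lambda>x. sum_list (map (\<lambda>(\<phi>, \<eta>). sc (\<eta> x) \<phi>) ps))}"

text \<open>A \<otimes> B^T acts on phi \<otimes> eta as (A phi) \<otimes> (B^T eta) = (A phi) \<otimes> (eta \<circ> B),
  i.e. on the corresponding map X as A \<circ> X \<circ> B.\<close>
definition tens_op :: "('a \<Rightarrow> 'a) \<Rightarrow> ('a \<Rightarrow> 'a) \<Rightarrow> ('a \<Rightarrow> 'a) \<Rightarrow> ('a \<Rightarrow> 'a)" where
  "tens_op A B X = A \<circ> X \<circ> B"

definition tens_spectrum ::
  "(complex \<Rightarrow> 'a::ab_group_add \<Rightarrow> 'a) \<Rightarrow> ('a \<Rightarrow> 'a \<Rightarrow> complex)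
    \<Rightarrow> (('a \<Rightarrow> 'a) \<Rightarrow> ('a \<Rightarrow> 'a)) \<Rightarrow> complex set" where
  "tens_spectrum sc ip T =
     {lam. \<not> bij_betw (\<lambda>X. \<lambda>x. T X x - sc lam (X x)) (tens_space sc ip) (tens_space sc ip)}"

definition poly_op ::
  "(complex \<Rightarrow> 'a::ab_group_add \<Rightarrow> 'a) \<Rightarrow> complex poly
    \<Rightarrow> (('a \<Rightarrow> 'a) \<Rightarrow> ('a \<Rightarrow> 'a)) \<Rightarrow> ('a \<Rightarrow> 'a) \<Rightarrow> ('a \<Rightarrow> 'a)" where
  "poly_op sc q T X = (\<lambda>x. \<Sum>i\<le>degree q. sc (coeff q i) ((T ^^ i) X x))"

definition lagrange_poly :: "complex set \<Rightarrow> complex \<Rightarrow> complex poly" where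
  "lagrange_poly S lam = (\<Prod>\<mu>\<in>S - {lam}. [:- \<mu> / (lam - \<mu>), 1 / (lam - \<mu>):])"

text \<open>Functional calculus for an operator with finite spectrum:
  f(T) = \<Sum>_{lam \<in> spec T} f(lam) E_lam, with spectral projections E_lam = L_lam(T).\<close>
definition fcalc ::
  "(complex \<Rightarrow> 'a::ab_group_add \<Rightarrow> 'a) \<Rightarrow> ('a \<Rightarrow> 'a \<Rightarrow> complex) \<Rightarrow> (complex \<Rightarrow> complex)
    \<Rightarrow> (('a \<Rightarrow> 'a) \<Rightarrow> ('a \<Rightarrow> 'a)) \<Rightarrow> ('a \<Rightarrow> 'a) \<Rightarrow> ('a \<Rightarrow> 'a)" where
  "fcalc sc ip f T X =
     (\<lambda>x. \<Sum>lam\<in>tens_spectrum sc ip T.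
            sc (f lam) (poly_op sc (lagrange_poly (tens_spectrum sc ip T) lam) T X x))"

text \<open>C_{A,p} = \<Sum>_k |A_k \<otimes> I^T - I \<otimes> A_k^T|^p, as an operator on H \<otimes> H*.\<close>
definition C_op ::
  "(complex \<Rightarrow> 'a::ab_group_add \<Rightarrow> 'a) \<Rightarrow> ('a \<Rightarrow> 'a \<Rightarrow> complex) \<Rightarrow> real
    \<Rightarrow> ('a \<Rightarrow> 'a) list \<Rightarrow> ('a \<Rightarrow> 'a) \<Rightarrow> ('a \<Rightarrow> 'a)" where
  "C_op sc ip p As X =
     (\<lambda>x. sum_list (map (\<lambda>A.
        fcalc sc ip (\<lambda>lam. complex_of_real (cmod lam powr p))
          (\<lambda>Y. \<lambda>y. tens_op A id Y y - tens_op id A Y y) X x) As))"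

definition C_set ::
  "(complex \<Rightarrow> 'a::ab_group_add \<Rightarrow> 'a) \<Rightarrow> ('a \<Rightarrow> 'a \<Rightarrow> complex) \<Rightarrow> real
    \<Rightarrow> (('a \<Rightarrow> 'a) \<Rightarrow> ('a \<Rightarrow> 'a)) set" where
  "C_set sc ip p =
     {restrict (C_op sc ip p As) (tens_space sc ip) | As.
        \<forall>A\<in>set As. is_fs_observable sc ip A}"

end

theory Submission
  imports Defs "HOL-Computational_Algebra.Fundamental_Theorem_Algebra"
begin

text \<open>
  Let \<open>A = \<Sum>\<^sub>i \<lambda>\<^sub>i P\<^sub>i\<close> be the spectral decomposition of an observable with finite spectrum.
  The operator \<open>A \<otimes> I - I \<otimes> A\<^sup>T\<close> acts on the component \<open>P\<^sub>i X P\<^sub>j\<close> of \<open>X\<close> as multiplication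
  by \<open>\<lambda>\<^sub>i - \<lambda>\<^sub>j\<close>, so its absolute value multiplies that component by \<open>\<bar>\<lambda>\<^sub>i - \<lambda>\<^sub>j\<bar>\<close>.
  For each eigenvalue \<open>t\<close> let \<open>Q\<^sub>t\<close> be the spectral projection of \<open>(-\<infinity>, t]\<close> and \<open>g\<^sub>t\<close> the gap
  from \<open>t\<close> to the next eigenvalue. Then \<open>\<bar>\<lambda>\<^sub>i - \<lambda>\<^sub>j\<bar>\<close> is the sum of the \<open>g\<^sub>t\<close> over the \<open>t\<close>
  separating \<open>\<lambda>\<^sub>i\<close> from \<open>\<lambda>\<^sub>j\<close>, while for \<open>B\<^sub>t = g\<^sub>t\<^sup>1\<^sup>/\<^sup>p Q\<^sub>t\<close> the operator
  \<open>\<bar>B\<^sub>t \<otimes> I - I \<otimes> B\<^sub>t\<^sup>T\<bar>\<^sup>p\<close> multiplies the component \<open>(i, j)\<close> by \<open>g\<^sub>t\<close> exactly when \<open>t\<close>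
  separates them. Hence \<open>\<bar>A \<otimes> I - I \<otimes> A\<^sup>T\<bar> = \<Sum>\<^sub>t \<bar>B\<^sub>t \<otimes> I - I \<otimes> B\<^sub>t\<^sup>T\<bar>\<^sup>p\<close>, and every
  \<open>C\<^sub>\<A>\<^sub>,\<^sub>1\<close> is a \<open>C\<^sub>\<B>\<^sub>,\<^sub>p\<close>.

  The spectral decomposition comes from Lagrange interpolation, once the product of the
  \<open>A - \<lambda>\<close> over the spectrum is known to vanish. That product is self-adjoint with spectrum
  in \<open>{0}\<close>, and such an operator is zero by a norm argument, which uses completeness through a
  gliding-hump form of the uniform boundedness principle.
\<close>

section \<open>Polynomials and gaps\<close>

lemma prod_linear_factors_dvd:
  fixes s :: "complex poly"
  assumes "finite R" and "\<forall>\<tau>\<in>R. poly s \<tau> = 0"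
  shows "(\<Prod>\<rho>\<in>R. [:- \<rho>, 1:]) dvd s"
  using assms
proof (induction R arbitrary: s rule: finite_induct)
  case (insert a R)
  obtain t where t: "s = [:- a, 1:] * t"
    using insert.prems poly_eq_0_iff_dvd by (metis dvdE insert_iff)
  have "\<forall>\<tau>\<in>R. poly t \<tau> = 0"
    using insert.prems insert.hyps(2) by (auto simp: t)
  then have "(\<Prod>\<rho>\<in>R. [:- \<rho>, 1:]) dvd t"
    by (rule insert.IH)
  then have "[:- a, 1:] * (\<Prod>\<rho>\<in>R. [:- \<rho>, 1:]) dvd [:- a, 1:] * t"
    by (rule mult_dvd_mono[OF dvd_refl])
  then show ?case
    unfolding t prod.insert[OF insert.hyps] .
qed simp

lemma poly_lagrange_poly:
  assumes "finite S" and "l \<in> S" and "m \<in> S"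
  shows "poly (lagrange_poly S l) m = (if m = l then 1 else 0)"
proof (cases "m = l")
  case True
  have "poly (lagrange_poly S l) m = (\<Prod>\<nu>\<in>S - {l}. 1)"
    unfolding lagrange_poly_def poly_prod True by (rule prod.cong) (auto simp: field_simps)
  then show ?thesis
    using True by simp
next
  case False
  have "poly (lagrange_poly S l) m = (\<Prod>\<nu>\<in>S - {l}. poly [:- \<nu> / (l - \<nu>), 1 / (l - \<nu>):] m)"
    unfolding lagrange_poly_def poly_prod by simp
  also have "\<dots> = 0"
    using assms False by (intro prod_zero) (auto intro!: bexI[of _ m] simp: field_simps)
  finally show ?thesis
    using False by simp
qed

lemma map_poly_cnj_prod_linear_factors:
  assumes "finite R" and "cnj ` R = R"
  shows "map_poly cnj (\<Prod>\<rho>\<in>R. [:- \<rho>, 1:]) = (\<Prod>\<rho>\<in>R. [:- \<rho>, 1:])"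
proof -
  have "poly (map_poly cnj (\<Prod>\<rho>\<in>R. [:- \<rho>, 1:])) z = (\<Prod>\<rho>\<in>cnj ` R. z - \<rho>)" for z
    by (simp add: poly_map_poly_cnj poly_prod cnj_prod prod.reindex inj_on_def)
  then show ?thesis
    using assms(2) by (simp add: poly_eq_poly_eq_iff[symmetric] poly_prod fun_eq_iff)
qed

definition gap :: "real set \<Rightarrow> real \<Rightarrow> real" where
  "gap L t = (if \<exists>s\<in>L. t < s then Min {s\<in>L. t < s} - t else 0)"

lemma gap_nonneg:
  assumes "finite L"
  shows "gap L t \<ge> 0"
proof (cases "\<exists>s\<in>L. t < s")
  case True
  then have "Min {s\<in>L. t < s} \<in> {s\<in>L. t < s}"
    using assms by (intro Min_in) auto
  then show ?thesis
    unfolding gap_def by auto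
qed (simp add: gap_def)

lemma sum_gap_interval:
  assumes fin: "finite L" and "a \<in> L" and "b \<in> L" and "a \<le> b"
  shows "(\<Sum>t\<in>{t\<in>L. a \<le> t \<and> t < b}. gap L t) = b - a"
  using assms(2-)
proof (induction "card {t\<in>L. a \<le> t \<and> t < b}" arbitrary: a rule: less_induct)
  case less
  show ?case
  proof (cases "a = b")
    case False
    then have "a < b"
      using less.prems by simp
    define m where "m = Min {s\<in>L. a < s}"
    have "m \<in> {s\<in>L. a < s}"
      unfolding m_def using fin \<open>a < b\<close> less.prems(2) by (intro Min_in) auto
    then have m: "m \<in> L" "a < m"
      by auto
    have m_least: "m \<le> s" if "s \<in> L" "a < s" for s
      unfolding m_def using that fin by (intro Min_le) auto
    have split: "{t\<in>L. a \<le> t \<and> t < b} = insert a {t\<in>L. m \<le> t \<and> t < b}"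
      using m m_least less.prems \<open>a < b\<close> by force
    have "a \<notin> {t\<in>L. m \<le> t \<and> t < b}" and fin_m: "finite {t\<in>L. m \<le> t \<and> t < b}"
      using m fin by auto
    then have "card {t\<in>L. m \<le> t \<and> t < b} < card {t\<in>L. a \<le> t \<and> t < b}"
      unfolding split by simp
    then have "(\<Sum>t\<in>{t\<in>L. m \<le> t \<and> t < b}. gap L t) = b - m"
      using less.hyps m less.prems(2) m_least[OF less.prems(2) \<open>a < b\<close>] by blast
    moreover have "gap L a = m - a"
      unfolding gap_def m_def using less.prems(2) \<open>a < b\<close> by auto
    ultimately show ?thesis
      unfolding split using \<open>a \<notin> _\<close> fin_m by simp
  qed (auto intro!: sum.neutral)
qed

lemma sum_gap_crossing:
  assumes "finite L" and "a \<in> L" and "b \<in> L"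
  shows "(\<Sum>t\<in>L. gap L t * (if (a \<le> t) \<noteq> (b \<le> t) then 1 else 0)) = \<bar>a - b\<bar>"
proof -
  have "(\<Sum>t\<in>L. gap L t * (if (a \<le> t) \<noteq> (b \<le> t) then 1 else 0)) =
      (\<Sum>t\<in>{t\<in>L. min a b \<le> t \<and> t < max a b}. gap L t)"
    using assms(1) by (simp add: sum.inter_filter) (intro sum.cong; auto simp: min_def max_def)
  also have "\<dots> = max a b - min a b"
    using assms by (intro sum_gap_interval) (auto simp: min_def max_def)
  finally show ?thesis
    by (simp add: min_def max_def)
qed

section \<open>Hilbert space arithmetic\<close>

locale complex_hilbert =
  fixes sc :: "complex \<Rightarrow> 'a::ab_group_add \<Rightarrow> 'a" and ip :: "'a \<Rightarrow> 'a \<Rightarrow> complex"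
  assumes hilbert: "is_complex_hilbert sc ip"
begin

abbreviation N :: "'a \<Rightarrow> real" where "N \<equiv> hnorm ip"

lemmas hilbert_axioms = hilbert[unfolded is_complex_hilbert_def]

lemma sc_one [simp]: "sc 1 x = x"
  using hilbert_axioms by meson

lemma sc_sc [simp]: "sc a (sc b x) = sc (a * b) x"
  using hilbert_axioms by meson

lemma sc_add_right: "sc a (x + y) = sc a x + sc a y"
  using hilbert_axioms by meson

lemma sc_add_left: "sc (a + b) x = sc a x + sc b x"
  using hilbert_axioms by meson

lemma ip_cnj: "ip x y = cnj (ip y x)"
  using hilbert_axioms by meson

lemma ip_add_right: "ip x (y + z) = ip x y + ip x z"
  using hilbert_axioms by meson

lemma ip_sc_right [simp]: "ip x (sc a y) = a * ip x y"
  using hilbert_axioms by meson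

lemma ip_self_Re_nonneg: "0 \<le> Re (ip x x)"
  using hilbert_axioms by meson

lemma ip_self_eq_0: "ip x x = 0 \<Longrightarrow> x = 0"
  using hilbert_axioms by meson

lemma complete:
  assumes "\<forall>e>0. \<exists>M. \<forall>m\<ge>M. \<forall>n\<ge>M. N (f m - f n) < e"
  shows "\<exists>l. (\<lambda>n. N (f n - l)) \<longlonglongrightarrow> 0"
  using hilbert_axioms assms by meson

lemma sc_0_left [simp]: "sc 0 x = 0"
  using sc_add_left[of 0 0 x] by simp

lemma sc_0_right [simp]: "sc a 0 = 0"
  using sc_add_right[of a 0 0] by simp

lemma sc_minus_right: "sc a (- x) = - sc a x"
  using sc_add_right[of a x "- x"] by (simp add: eq_neg_iff_add_eq_0 add.commute)

lemma sc_minus_left: "sc (- a) x = - sc a x"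
  using sc_add_left[of a "- a" x] by (simp add: eq_neg_iff_add_eq_0 add.commute)

lemma sc_diff_right: "sc a (x - y) = sc a x - sc a y"
  by (metis diff_conv_add_uminus sc_add_right sc_minus_right)

lemma sc_diff_left: "sc (a - b) x = sc a x - sc b x"
  by (metis diff_conv_add_uminus sc_add_left sc_minus_left)

lemma sc_sum_right: "sc a (sum f A) = (\<Sum>i\<in>A. sc a (f i))"
  by (induction A rule: infinite_finite_induct) (auto simp: sc_add_right)

lemma sc_sum_left: "sc (sum f A) x = (\<Sum>i\<in>A. sc (f i) x)"
  by (induction A rule: infinite_finite_induct) (auto simp: sc_add_left)

lemma sc_cancel:
  assumes "c \<noteq> 0" and "sc c x = sc c y"
  shows "x = y"
proof -
  have "sc (1 / c) (sc c x) = sc (1 / c) (sc c y)"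
    using assms(2) by simp
  then show ?thesis
    using assms(1) by simp
qed

lemma ip_add_left: "ip (x + y) z = ip x z + ip y z"
  by (metis complex_cnj_add ip_add_right ip_cnj)

lemma ip_sc_left [simp]: "ip (sc a x) y = cnj a * ip x y"
  by (metis complex_cnj_cnj complex_cnj_mult ip_cnj ip_sc_right)

lemma ip_0_right [simp]: "ip x 0 = 0"
  using ip_sc_right[of x 0 0] by simp

lemma ip_0_left [simp]: "ip 0 x = 0"
  using ip_sc_left[of 0 0 x] by simp

lemma ip_diff_right: "ip x (y - z) = ip x y - ip x z"
  by (metis add_diff_cancel diff_add_cancel ip_add_right)

lemma ip_diff_left: "ip (x - y) z = ip x z - ip y z"
  by (metis add_diff_cancel diff_add_cancel ip_add_left)

lemma ip_sum_right: "ip x (sum f A) = (\<Sum>i\<in>A. ip x (f i))"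
  by (induction A rule: infinite_finite_induct) (auto simp: ip_add_right)

lemma ip_sum_left: "ip (sum f A) x = (\<Sum>i\<in>A. ip (f i) x)"
  by (induction A rule: infinite_finite_induct) (auto simp: ip_add_left)

lemma ip_self_real: "ip x x = complex_of_real (Re (ip x x))"
  using ip_cnj[of x x] by (simp add: complex_eq_iff)

lemma ip_self_eq_N: "ip x x = complex_of_real ((N x)\<^sup>2)"
  unfolding hnorm_def using ip_self_real[of x] by (simp add: ip_self_Re_nonneg)

lemma N_power2: "(N x)\<^sup>2 = Re (ip x x)"
  unfolding hnorm_def by (simp add: ip_self_Re_nonneg)

lemma N_nonneg [simp]: "N x \<ge> 0"
  unfolding hnorm_def by (simp add: ip_self_Re_nonneg)

lemma N_eq_0_iff [simp]: "N x = 0 \<longleftrightarrow> x = 0"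
  using ip_self_eq_N[of x] ip_self_eq_0[of x] by auto

lemma N_0 [simp]: "N 0 = 0"
  by simp

lemma N_pos_iff [simp]: "0 < N x \<longleftrightarrow> x \<noteq> 0"
  using N_nonneg[of x] N_eq_0_iff[of x] by linarith

lemma N_sc: "N (sc a x) = cmod a * N x"
proof -
  have "cnj a * a = complex_of_real ((cmod a)\<^sup>2)"
    by (metis complex_norm_square mult.commute of_real_power)
  then have "Re (ip (sc a x) (sc a x)) = (cmod a)\<^sup>2 * Re (ip x x)"
    by (metis Re_complex_of_real ip_sc_left ip_sc_right ip_self_real mult.assoc of_real_mult)
  then show ?thesis
    unfolding hnorm_def by (simp add: real_sqrt_mult)
qed

lemma N_minus: "N (- x) = N x"
  using N_sc[of "- 1" x] by (simp add: sc_minus_left)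

lemma N_diff_commute: "N (x - y) = N (y - x)"
  by (metis N_minus minus_diff_eq)

lemma cauchy_schwarz: "cmod (ip x y) \<le> N x * N y"
proof (cases "x = 0")
  case False
  define a where "a = (N x)\<^sup>2"
  have a: "a > 0" "ip x x = complex_of_real a"
    using False ip_self_eq_N by (auto simp: a_def)
  define t where "t = ip x y / complex_of_real a"
  have sq: "ip x y * cnj (ip x y) = complex_of_real ((cmod (ip x y))\<^sup>2)"
    by (metis complex_norm_square of_real_power)
  have "ip (y - sc t x) (y - sc t x) = ip y y - t * ip y x - cnj t * ip x y + cnj t * t * ip x x"
    by (simp add: ip_diff_left ip_diff_right algebra_simps)
  also have "ip y x = cnj (ip x y)"
    by (rule ip_cnj)
  also have "cnj t * t * ip x x = complex_of_real ((cmod (ip x y))\<^sup>2 / a)"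
    unfolding t_def a(2) using a(1) sq by (simp add: field_simps power2_eq_square)
  also have "t * cnj (ip x y) = complex_of_real ((cmod (ip x y))\<^sup>2 / a)"
    unfolding t_def using a(1) sq by (simp add: field_simps)
  also have "cnj t * ip x y = complex_of_real ((cmod (ip x y))\<^sup>2 / a)"
    unfolding t_def using a(1) sq by (simp add: field_simps mult.commute)
  finally have "ip (y - sc t x) (y - sc t x) = ip y y - complex_of_real ((cmod (ip x y))\<^sup>2 / a)"
    by simp
  then have "(cmod (ip x y))\<^sup>2 / a \<le> (N y)\<^sup>2"
    using ip_self_Re_nonneg[of "y - sc t x"] by (simp add: ip_self_eq_N)
  then have "(cmod (ip x y))\<^sup>2 \<le> (N x * N y)\<^sup>2"
    using a(1) by (simp add: a_def field_simps power_mult_distrib)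
  then show ?thesis
    by (meson N_nonneg mult_nonneg_nonneg power2_le_imp_le)
qed simp

lemma N_triangle: "N (x + y) \<le> N x + N y"
proof -
  have "(N (x + y))\<^sup>2 = (N x)\<^sup>2 + (N y)\<^sup>2 + Re (ip x y + ip y x)"
    by (simp add: N_power2 ip_add_left ip_add_right)
  also have "Re (ip x y + ip y x) = 2 * Re (ip x y)"
    using ip_cnj[of y x] by simp
  also have "\<dots> \<le> 2 * (N x * N y)"
    using cauchy_schwarz[of x y] complex_Re_le_cmod[of "ip x y"] by linarith
  finally have "(N (x + y))\<^sup>2 \<le> (N x + N y)\<^sup>2"
    by (simp add: power2_sum)
  then show ?thesis
    by (meson N_nonneg add_nonneg_nonneg power2_le_imp_le)
qed

lemma N_triangle_diff:
  fixes x y z :: 'a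
  shows "N (x - z) \<le> N (x - y) + N (y - z)"
  using N_triangle[of "x - y" "y - z"] by simp

section \<open>Self-adjoint operators with spectrum in \<open>{0}\<close> vanish\<close>

lemma geometric_steps_converge:
  assumes step: "\<And>n. N (xs (Suc n) - xs n) \<le> c * q ^ n" and q: "0 \<le> q" "q < 1"
  obtains l where "\<And>n. N (xs n - l) \<le> c * q ^ n / (1 - q)"
proof -
  have c: "c \<ge> 0"
    using order_trans[OF N_nonneg step[of 0]] by simp
  have tail: "N (xs m - xs n) \<le> c * (q ^ n - q ^ m) / (1 - q)" if "n \<le> m" for n m
    using that
  proof (induction m rule: dec_induct)
    case (step m)
    have "N (xs (Suc m) - xs n) \<le> N (xs (Suc m) - xs m) + N (xs m - xs n)"
      by (rule N_triangle_diff)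
    also have "\<dots> \<le> c * q ^ m + c * (q ^ n - q ^ m) / (1 - q)"
      using step.IH assms(1)[of m] by linarith
    also have "\<dots> = c * (q ^ n - q ^ Suc m) / (1 - q)"
      using q by (simp add: field_simps)
    finally show ?case .
  qed simp
  have tail': "N (xs m - xs n) \<le> c * q ^ n / (1 - q)" if "n \<le> m" for n m
    using tail[OF that] c q by (smt (verit, best) divide_right_mono mult_left_mono zero_le_power)
  have "\<forall>e>0. \<exists>K. \<forall>m\<ge>K. \<forall>n\<ge>K. N (xs m - xs n) < e"
  proof (intro allI impI)
    fix e :: real
    assume "e > 0"
    have "(\<lambda>n. c * q ^ n / (1 - q)) \<longlonglongrightarrow> 0"
      using q by (intro tendsto_divide_zero tendsto_mult_right_zero LIMSEQ_power_zero) auto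
    then obtain K where K: "c * q ^ K / (1 - q) < e / 2"
      using \<open>e > 0\<close> by (metis half_gt_zero_iff LIMSEQ_D diff_zero order_refl real_norm_def abs_less_iff)
    have "N (xs m - xs n) < e" if "K \<le> m" "K \<le> n" for m n
      using N_triangle_diff[where x = "xs m" and y = "xs K" and z = "xs n"] N_diff_commute[of "xs K" "xs n"]
        tail'[OF that(1)] tail'[OF that(2)] K by linarith
    then show "\<exists>K. \<forall>m\<ge>K. \<forall>n\<ge>K. N (xs m - xs n) < e"
      by blast
  qed
  then obtain l where l: "(\<lambda>n. N (xs n - l)) \<longlonglongrightarrow> 0"
    using complete by blast
  have "N (xs n - l) \<le> c * q ^ n / (1 - q)" for n
  proof (rule field_le_epsilon)
    fix e :: real
    assume "e > 0"
    have "eventually (\<lambda>m. N (xs m - l) < e) sequentially"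
      using l \<open>e > 0\<close> by (rule order_tendstoD(2))
    then obtain K where K: "\<forall>m\<ge>K. N (xs m - l) < e"
      by (auto simp: eventually_sequentially)
    then have "N (xs (max n K) - l) < e"
      by simp
    then show "N (xs n - l) \<le> c * q ^ n / (1 - q) + e"
      using N_triangle_diff[where x = "xs n" and y = "xs (max n K)" and z = l]
        N_diff_commute[of "xs n" "xs (max n K)"] tail'[of n "max n K"] by simp
  qed
  then show thesis
    using that by blast
qed

text \<open>A weak form of the uniform boundedness principle, proved by a gliding hump: the signs
  in \<open>x\<^sub>n\<^sub>+\<^sub>1 = x\<^sub>n \<plusminus> v\<^sub>n\<^sub>+\<^sub>1\<close> are chosen so that \<open>\<bar>\<langle>z\<^sub>n\<^sub>+\<^sub>1, x\<^sub>n\<^sub>+\<^sub>1\<rangle>\<bar>\<close> is large, and the later,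
  geometrically smaller, corrections cannot destroy this.\<close>

lemma fast_growth_not_pointwise_bounded:
  assumes z: "\<And>n. 4 ^ n \<le> N (z n)"
  obtains l where "\<And>M. \<exists>n. M < cmod (ip (z n) l)"
proof -
  have z_pos: "N (z n) > 0" for n
    using z[of n] by (smt (verit) zero_less_power)
  define r where "r n = (1 / 3 :: real) ^ n" for n
  define v where "v n = sc (complex_of_real (r n / N (z n))) (z n)" for n
  define xs where "xs = rec_nat 0 (\<lambda>n x. if r (Suc n) * N (z (Suc n)) \<le> cmod (ip (z (Suc n)) (x + v (Suc n)))
                 then x + v (Suc n) else x - v (Suc n))"
  have xs_Suc: "xs (Suc n) = (if r (Suc n) * N (z (Suc n)) \<le> cmod (ip (z (Suc n)) (xs n + v (Suc n)))
                 then xs n + v (Suc n) else xs n - v (Suc n))" for n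
    unfolding xs_def by simp
  have N_v: "N (v n) = r n" for n
    using z_pos[of n] by (simp add: v_def N_sc r_def norm_divide norm_power)
  have ip_v: "ip (z n) (v n) = complex_of_real (r n * N (z n))" for n
    using z_pos[of n] by (simp add: v_def ip_self_eq_N power2_eq_square)
  have hump: "r (Suc n) * N (z (Suc n)) \<le> cmod (ip (z (Suc n)) (xs (Suc n)))" for n
  proof -
    let ?a = "ip (z (Suc n)) (xs n)" and ?b = "r (Suc n) * N (z (Suc n))"
    have "(?a + ?b) - (?a - ?b) = complex_of_real (2 * ?b)"
      by simp
    then have "2 * ?b = cmod ((?a + ?b) - (?a - ?b))"
      using z_pos[of "Suc n"] by (simp only: norm_of_real) (simp add: r_def)
    also have "\<dots> \<le> cmod (?a + ?b) + cmod (?a - ?b)"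
      by (rule norm_triangle_ineq4)
    finally show ?thesis
      using ip_v[of "Suc n"] by (auto simp: xs_Suc ip_add_right ip_diff_right)
  qed
  have "N (xs (Suc n) - xs n) \<le> 1 / 3 * (1 / 3) ^ n" for n
    using N_v[of "Suc n"] by (simp add: xs_Suc N_minus r_def)
  then obtain l where l: "\<And>n. N (xs n - l) \<le> 1 / 3 * (1 / 3) ^ n / (1 - 1 / 3)"
    using geometric_steps_converge[of xs "1 / 3" "1 / 3"] by auto
  have grow: "(4 / 3) ^ Suc n / 2 \<le> cmod (ip (z (Suc n)) l)" for n
  proof -
    let ?w = "z (Suc n)"
    have "N (xs (Suc n) - l) \<le> r (Suc n) / 2"
      using l[of "Suc n"] by (simp add: r_def)
    then have "cmod (ip ?w (xs (Suc n) - l)) \<le> N ?w * (r (Suc n) / 2)"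
      using cauchy_schwarz[of ?w "xs (Suc n) - l"] mult_left_mono[OF _ N_nonneg] order_trans by blast
    moreover have "cmod (ip ?w (xs (Suc n))) \<le> cmod (ip ?w l) + cmod (ip ?w (xs (Suc n) - l))"
      using norm_triangle_ineq[of "ip ?w l" "ip ?w (xs (Suc n) - l)"] by (simp add: ip_diff_right)
    moreover have "N ?w * (r (Suc n) / 2) = r (Suc n) * N ?w / 2"
      by simp
    ultimately have "r (Suc n) * N ?w / 2 \<le> cmod (ip ?w l)"
      using hump[of n] by linarith
    moreover have "(4 / 3) ^ Suc n \<le> r (Suc n) * N ?w"
      using divide_right_mono[OF z[of "Suc n"], of "3 ^ Suc n"] by (simp add: r_def power_divide)
    ultimately show ?thesis
      by linarith
  qed
  have "\<exists>n. M < cmod (ip (z n) l)" for M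
  proof -
    obtain n where "2 * M < (4 / 3 :: real) ^ n"
      using real_arch_pow[of "4 / 3" "2 * M"] by auto
    moreover have "(4 / 3) ^ n \<le> (4 / 3 :: real) ^ Suc n"
      by simp
    ultimately have "M < (4 / 3) ^ Suc n / 2"
      by linarith
    then show ?thesis
      using grow[of n] by (intro exI[of _ "Suc n"]) linarith
  qed
  then show thesis
    using that by blast
qed

definition selfadjoint :: "('a \<Rightarrow> 'a) \<Rightarrow> bool" where
  "selfadjoint A \<longleftrightarrow> (\<forall>x y. ip (A x) y = ip x (A y))"

lemma selfadjointD: "selfadjoint A \<Longrightarrow> ip (A x) y = ip x (A y)"
  unfolding selfadjoint_def by blast

lemma clinear_add: "is_clinear sc A \<Longrightarrow> A (x + y) = A x + A y"
  unfolding is_clinear_def by blast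

lemma clinear_sc: "is_clinear sc A \<Longrightarrow> A (sc c x) = sc c (A x)"
  unfolding is_clinear_def by blast

lemma clinear_0: "is_clinear sc A \<Longrightarrow> A 0 = 0"
  using clinear_sc[of A 0 0] by simp

lemma clinear_minus: "is_clinear sc A \<Longrightarrow> A (- x) = - A x"
  using clinear_sc[of A "- 1" x] by (simp add: sc_minus_left)

lemma clinear_diff: "is_clinear sc A \<Longrightarrow> A (x - y) = A x - A y"
  by (metis diff_conv_add_uminus clinear_add clinear_minus)

lemma clinear_sum: "is_clinear sc A \<Longrightarrow> A (sum f S) = (\<Sum>i\<in>S. A (f i))"
  by (induction S rule: infinite_finite_induct) (auto simp: clinear_0 clinear_add)

lemma surj_selfadjoint_bounded_below:
  assumes lin: "is_clinear sc D" and sa: "selfadjoint D" and surj: "surj D"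
  obtains c where "c > 0" "\<And>x. c * N x \<le> N (D x)"
proof -
  have "\<exists>c>0. \<forall>x. c * N x \<le> N (D x)"
  proof (rule ccontr)
    assume "\<not> (\<exists>c>0. \<forall>x. c * N x \<le> N (D x))"
    then have small: "\<exists>x. N (D x) < c * N x" if "c > 0" for c
      using that by (meson not_le)
    have "\<exists>y. N (D y) \<le> 1 \<and> 4 ^ n \<le> N y" for n :: nat
    proof -
      obtain x where x: "N (D x) < N x / 4 ^ n"
        using small[of "1 / 4 ^ n"] by auto
      then have "x \<noteq> 0"
        using N_nonneg[of "D x"] clinear_0[OF lin] by auto
      define y where "y = sc (complex_of_real (4 ^ n / N x)) x"
      have "N y = 4 ^ n" and "N (D y) = 4 ^ n / N x * N (D x)"
        using \<open>x \<noteq> 0\<close> by (simp_all add: y_def N_sc clinear_sc[OF lin] norm_divide norm_power)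
      moreover have "4 ^ n / N x * N (D x) \<le> 1"
        using x \<open>x \<noteq> 0\<close> by (simp add: field_simps)
      ultimately show ?thesis
        by (intro exI[of _ y]) simp
    qed
    then obtain z where z: "\<And>n. N (D (z n)) \<le> 1" "\<And>n. 4 ^ n \<le> N (z n)"
      by metis
    obtain l where l: "\<And>M. \<exists>n. M < cmod (ip (z n) l)"
      using fast_growth_not_pointwise_bounded[OF z(2)] by blast
    obtain u where "l = D u"
      using surj by (metis surj_def)
    then have "cmod (ip (z n) l) \<le> N u" for n
      using order_trans[OF cauchy_schwarz mult_left_le_one_le[OF N_nonneg N_nonneg z(1)]]
      by (simp add: selfadjointD[OF sa, symmetric])
    then show False
      using l[of "N u"] by (meson leD)
  qed
  then show thesis
    using that by blast
qed

lemma bounded_op_norm: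
  assumes lin: "is_clinear sc B" and bnd: "is_bounded_op ip B"
  obtains M where "M \<ge> 0" "\<And>y. N (B y) \<le> M * N y"
    "\<And>\<delta>. \<delta> > 0 \<Longrightarrow> \<exists>y. N y \<le> 1 \<and> M - \<delta> < N (B y)"
proof -
  obtain K where K: "\<And>x. N (B x) \<le> K * N x"
    using bnd unfolding is_bounded_op_def by blast
  define S where "S = {N (B x) | x. N x \<le> 1}"
  have S0: "0 \<in> S"
    unfolding S_def using clinear_0[OF lin] by force
  have bdd: "bdd_above S"
  proof (rule bdd_aboveI)
    fix s
    assume "s \<in> S"
    then obtain y where "s = N (B y)" "N y \<le> 1"
      unfolding S_def by blast
    have "K * N y \<le> \<bar>K\<bar> * N y"
      by (rule mult_right_mono) auto
    also have "\<dots> \<le> \<bar>K\<bar>"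
      using \<open>N y \<le> 1\<close> by (simp add: mult_left_le)
    finally show "s \<le> \<bar>K\<bar>"
      using K[of y] \<open>s = N (B y)\<close> by linarith
  qed
  define M where "M = Sup S"
  have "M \<ge> 0"
    unfolding M_def using S0 bdd by (rule cSup_upper)
  moreover have "N (B y) \<le> M * N y" for y
  proof (cases "y = 0")
    case False
    define u where "u = sc (complex_of_real (1 / N y)) y"
    have "N u = 1"
      using False by (simp add: u_def N_sc norm_divide)
    then have "N (B u) \<le> M"
      unfolding M_def using bdd by (intro cSup_upper) (auto simp: S_def)
    moreover have "N (B u) = N (B y) / N y"
      using False by (simp add: u_def N_sc clinear_sc[OF lin] norm_divide)
    ultimately show ?thesis
      using False by (simp add: divide_le_eq mult.commute)
  qed (simp add: clinear_0[OF lin])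
  moreover have "\<exists>y. N y \<le> 1 \<and> M - \<delta> < N (B y)" if "\<delta> > 0" for \<delta>
  proof -
    have "M - \<delta> < Sup S"
      using that unfolding M_def by simp
    then obtain s where "s \<in> S" "M - \<delta> < s"
      using less_cSup_iff[OF _ bdd] S0 by blast
    then show ?thesis
      unfolding S_def by blast
  qed
  ultimately show thesis
    using that by blast
qed

lemma selfadjoint_norm_square_shift:
  assumes sa: "selfadjoint B" and M: "\<And>z. N (B z) \<le> M * N z" "M \<ge> 0" and y: "N y \<le> 1"
  shows "(N (sc (complex_of_real (M\<^sup>2)) y - B (B y)))\<^sup>2 \<le> M ^ 4 - M\<^sup>2 * (N (B y))\<^sup>2"
proof -
  let ?m = "complex_of_real (M\<^sup>2)"
  have "ip y (B (B y)) = complex_of_real ((N (B y))\<^sup>2)" "ip (B (B y)) y = complex_of_real ((N (B y))\<^sup>2)"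
    using selfadjointD[OF sa, of y "B y"] selfadjointD[OF sa, of "B y" y] ip_self_eq_N[of "B y"] by auto
  moreover have "ip (sc ?m y - B (B y)) (sc ?m y - B (B y)) =
      cnj ?m * (?m * ip y y) - cnj ?m * ip y (B (B y)) - ?m * ip (B (B y)) y + ip (B (B y)) (B (B y))"
    by (simp add: ip_diff_left ip_diff_right algebra_simps)
  ultimately have "ip (sc ?m y - B (B y)) (sc ?m y - B (B y)) =
      complex_of_real (M ^ 4 * (N y)\<^sup>2 - 2 * M\<^sup>2 * (N (B y))\<^sup>2 + (N (B (B y)))\<^sup>2)"
    by (simp add: ip_self_eq_N algebra_simps)
  then have "(N (sc ?m y - B (B y)))\<^sup>2 = M ^ 4 * (N y)\<^sup>2 - 2 * M\<^sup>2 * (N (B y))\<^sup>2 + (N (B (B y)))\<^sup>2"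
    by (simp only: ip_self_eq_N of_real_eq_iff)
  moreover have "(N (B (B y)))\<^sup>2 \<le> M\<^sup>2 * (N (B y))\<^sup>2"
    using M(1)[of "B y"] by (metis N_nonneg power_mono power_mult_distrib)
  moreover have "M ^ 4 * (N y)\<^sup>2 \<le> M ^ 4"
    using y M(2) by (simp add: mult_left_le power_le_one)
  ultimately show ?thesis
    by linarith
qed

text \<open>With \<open>M = \<parallel>B\<parallel> > 0\<close>, the operator \<open>D = M\<^sup>2 - B\<^sup>2 = (M - B)(M + B)\<close> is surjective, hence bounded below;
  but \<open>D\<close> is small on the unit vectors nearly attaining the norm of \<open>B\<close>.\<close>

lemma selfadjoint_eq_0_if_surj_shifts:
  assumes lin: "is_clinear sc B" and bnd: "is_bounded_op ip B" and sa: "selfadjoint B"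
    and surj: "\<And>\<mu>. \<mu> \<noteq> 0 \<Longrightarrow> surj (\<lambda>x. B x - sc \<mu> x)"
  shows "B x = 0"
proof -
  obtain M where M: "M \<ge> 0" "\<And>y. N (B y) \<le> M * N y"
    and attained: "\<And>\<delta>. \<delta> > 0 \<Longrightarrow> \<exists>y. N y \<le> 1 \<and> M - \<delta> < N (B y)"
    using bounded_op_norm[OF lin bnd] by blast
  show ?thesis
  proof (cases "M = 0")
    case True
    then show ?thesis
      using M(2)[of x] N_nonneg[of "B x"] by simp
  next
    case False
    then have "M > 0"
      using M(1) by simp
    define D where "D x = sc (complex_of_real (M\<^sup>2)) x - B (B x)" for x
    have "is_clinear sc D"
      unfolding is_clinear_def D_def using clinear_add[OF lin] clinear_sc[OF lin]
      by (auto simp: sc_add_right sc_diff_right mult.commute)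
    moreover have "selfadjoint D"
      unfolding selfadjoint_def D_def by (auto simp: ip_diff_left ip_diff_right selfadjointD[OF sa])
    moreover have "surj D"
    proof (rule surjI)
      fix t
      obtain u where u: "- t = B u - sc (complex_of_real M) u"
        using surjD[OF surj[of "complex_of_real M"]] \<open>M > 0\<close> by auto
      obtain y where y: "u = B y - sc (- complex_of_real M) y"
        using surjD[OF surj[of "- complex_of_real M"]] \<open>M > 0\<close> by auto
      have "B u - sc (complex_of_real M) u = - D y"
        unfolding y D_def
        by (simp add: clinear_add[OF lin] clinear_sc[OF lin] sc_add_right sc_minus_left power2_eq_square)
      then have "D y = t"
        using u by simp
      then show "D (SOME y. D y = t) = t"
        by (rule someI)
    qed
    ultimately obtain c where c: "c > 0" "\<And>x. c * N x \<le> N (D x)"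
      using surj_selfadjoint_bounded_below by blast
    define \<delta> where "\<delta> = min (M / 2) (c\<^sup>2 / (16 * M ^ 3))"
    have "\<delta> > 0"
      unfolding \<delta>_def using \<open>M > 0\<close> c(1) by simp
    then obtain y where y: "N y \<le> 1" "M - \<delta> < N (B y)"
      using attained by blast
    have "M / 2 < M * N y"
      using M(2)[of y] y(2) unfolding \<delta>_def by linarith
    then have "c * (1 / 2) \<le> c * N y"
      using c(1) \<open>M > 0\<close> by (intro mult_left_mono) auto
    then have "c / 2 \<le> N (D y)"
      using c(2)[of y] by simp
    then have "(c / 2)\<^sup>2 \<le> (N (D y))\<^sup>2"
      using c(1) by (intro power_mono) auto
    also have "\<dots> \<le> M ^ 4 - M\<^sup>2 * (N (B y))\<^sup>2"
      unfolding D_def using selfadjoint_norm_square_shift[OF sa M(2,1) y(1)] .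
    also have "\<dots> \<le> M ^ 4 - M\<^sup>2 * (M - \<delta>)\<^sup>2"
    proof -
      have "(M - \<delta>)\<^sup>2 \<le> (N (B y))\<^sup>2"
        using y(2) \<open>M > 0\<close> unfolding \<delta>_def by (intro power_mono) auto
      then show ?thesis
        by (simp add: mult_left_mono)
    qed
    also have "\<dots> = M\<^sup>2 * (2 * M * \<delta>) - M\<^sup>2 * \<delta>\<^sup>2"
      by (simp add: algebra_simps power2_eq_square power4_eq_xxxx)
    also have "\<dots> \<le> M\<^sup>2 * (2 * M * \<delta>)"
      by simp
    also have "\<dots> \<le> M\<^sup>2 * (2 * M * (c\<^sup>2 / (16 * M ^ 3)))"
      unfolding \<delta>_def using \<open>M > 0\<close> by (intro mult_left_mono) auto
    also have "\<dots> = c\<^sup>2 / 8"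
      using \<open>M > 0\<close> by (simp add: field_simps power2_eq_square power3_eq_cube)
    finally have "(c / 2)\<^sup>2 \<le> c\<^sup>2 / 8" .
    then show ?thesis
      using c(1) by (simp add: power_divide)
  qed
qed

section \<open>Polynomials in an operator\<close>

definition op_poly :: "complex poly \<Rightarrow> ('a \<Rightarrow> 'a) \<Rightarrow> 'a \<Rightarrow> 'a" where
  "op_poly q A x = (\<Sum>i\<le>degree q. sc (coeff q i) ((A ^^ i) x))"

lemma op_poly_eq_sum_upto:
  assumes "degree q \<le> n"
  shows "op_poly q A x = (\<Sum>i\<le>n. sc (coeff q i) ((A ^^ i) x))"
  unfolding op_poly_def using assms by (intro sum.mono_neutral_left) (auto simp: coeff_eq_0)

lemma op_poly_0 [simp]: "op_poly 0 A x = 0"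
  unfolding op_poly_def by simp

lemma op_poly_const: "op_poly [:c:] A x = sc c x"
  unfolding op_poly_def by simp

lemma op_poly_1: "op_poly 1 A x = x"
  using op_poly_const[of 1 A x] by (simp add: one_pCons)

lemma op_poly_add: "op_poly (p + q) A x = op_poly p A x + op_poly q A x"
proof -
  let ?n = "max (degree p) (degree q)"
  have "op_poly (p + q) A x = (\<Sum>i\<le>?n. sc (coeff (p + q) i) ((A ^^ i) x))"
    by (rule op_poly_eq_sum_upto) (rule degree_add_le_max)
  also have "\<dots> = (\<Sum>i\<le>?n. sc (coeff p i) ((A ^^ i) x)) + (\<Sum>i\<le>?n. sc (coeff q i) ((A ^^ i) x))"
    by (simp add: sc_add_left sum.distrib)
  also have "\<dots> = op_poly p A x + op_poly q A x"
    by (simp add: op_poly_eq_sum_upto[symmetric])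
  finally show ?thesis .
qed

lemma op_poly_smult: "op_poly (smult c p) A x = sc c (op_poly p A x)"
  using op_poly_eq_sum_upto[OF degree_smult_le, of c p A x] by (simp add: op_poly_def sc_sum_right)

lemma op_poly_diff: "op_poly (p - q) A x = op_poly p A x - op_poly q A x"
  using op_poly_add[of "p - q" q A x] by (simp add: algebra_simps)

lemma op_poly_sum: "op_poly (\<Sum>i\<in>S. p i) A x = (\<Sum>i\<in>S. op_poly (p i) A x)"
  by (induction S rule: infinite_finite_induct) (auto simp: op_poly_add)

context
  fixes A :: "'a \<Rightarrow> 'a"
  assumes lin: "is_clinear sc A"
begin

lemma op_poly_pCons: "op_poly (pCons a p) A x = sc a x + A (op_poly p A x)"
proof -
  have "op_poly (pCons a p) A x = (\<Sum>i\<le>Suc (degree p). sc (coeff (pCons a p) i) ((A ^^ i) x))"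
    by (rule op_poly_eq_sum_upto) (simp add: degree_pCons_le)
  also have "\<dots> = sc a x + (\<Sum>i\<le>degree p. sc (coeff p i) (A ((A ^^ i) x)))"
    unfolding sum.atMost_Suc_shift by simp
  also have "\<dots> = sc a x + A (op_poly p A x)"
    unfolding op_poly_def by (simp add: clinear_sum[OF lin] clinear_sc[OF lin])
  finally show ?thesis .
qed

lemma op_poly_mult: "op_poly (p * q) A x = op_poly p A (op_poly q A x)"
proof (induction p rule: pCons_induct)
  case (pCons a p)
  have "op_poly (pCons a p * q) A x = op_poly (smult a q) A x + op_poly (pCons 0 (p * q)) A x"
    by (simp add: op_poly_add)
  also have "\<dots> = op_poly (pCons a p) A (op_poly q A x)"
    by (simp add: op_poly_smult op_poly_pCons pCons.IH)
  finally show ?case .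
qed simp

lemma op_poly_clinear: "is_clinear sc (op_poly p A)"
proof (induction p rule: pCons_induct)
  case (pCons a p)
  then show ?case
    unfolding is_clinear_def op_poly_pCons using clinear_add clinear_sc lin
    by (simp add: sc_add_right mult.commute)
qed (simp add: is_clinear_def)

lemma op_poly_linear_factor: "op_poly [:- z, 1:] A x = A x - sc z x"
  by (simp add: op_poly_pCons op_poly_const sc_minus_left clinear_0[OF lin])

lemma op_poly_X: "op_poly [:0, 1:] A x = A x"
  by (simp add: op_poly_pCons op_poly_const clinear_0[OF lin])

lemma op_poly_commute: "op_poly p A (A x) = A (op_poly p A x)"
  using op_poly_mult[of p "[:0, 1:]" x] op_poly_mult[of "[:0, 1:]" p x]
  by (simp add: op_poly_X mult.commute)

lemma op_poly_bounded:
  assumes "is_bounded_op ip A"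
  shows "is_bounded_op ip (op_poly p A)"
proof -
  obtain K where K: "\<And>x. N (A x) \<le> K * N x" and "K \<ge> 0"
    using assms unfolding is_bounded_op_def
    by (metis N_nonneg max.cobounded1 max.cobounded2 mult_right_mono order_trans)
  show ?thesis
    unfolding is_bounded_op_def
  proof (induction p rule: pCons_induct)
    case (pCons a p)
    then obtain Kp where Kp: "\<And>x. N (op_poly p A x) \<le> Kp * N x"
      by blast
    have "N (op_poly (pCons a p) A x) \<le> (cmod a + K * Kp) * N x" for x
    proof -
      have "N (op_poly (pCons a p) A x) \<le> N (sc a x) + N (A (op_poly p A x))"
        unfolding op_poly_pCons by (rule N_triangle)
      also have "\<dots> \<le> cmod a * N x + K * (Kp * N x)"
        using K[of "op_poly p A x"] Kp[of x] \<open>K \<ge> 0\<close> by (simp add: N_sc) (meson mult_left_mono order_trans)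
      finally show ?thesis
        by (simp add: algebra_simps)
    qed
    then show ?case
      by blast
  qed (auto intro!: exI[of _ 0])
qed

lemma op_poly_adjoint:
  assumes sa: "selfadjoint A"
  shows "ip (op_poly p A x) y = ip x (op_poly (map_poly cnj p) A y)"
proof (induction p arbitrary: x y rule: pCons_induct)
  case (pCons a p)
  have "ip (op_poly (pCons a p) A x) y = cnj a * ip x y + ip (op_poly p A x) (A y)"
    by (simp add: op_poly_pCons ip_add_left selfadjointD[OF sa])
  also have "\<dots> = cnj a * ip x y + ip x (A (op_poly (map_poly cnj p) A y))"
    by (simp add: pCons.IH op_poly_commute)
  also have "\<dots> = ip x (op_poly (map_poly cnj (pCons a p)) A y)"
    by (simp add: map_poly_pCons op_poly_pCons ip_add_right)
  finally show ?case .
qed simp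

lemma op_poly_surj:
  assumes "s \<noteq> 0" and "\<And>z. poly s z = 0 \<Longrightarrow> bij (\<lambda>x. A x - sc z x)"
  shows "surj (op_poly s A)"
  using assms
proof (induction "degree s" arbitrary: s rule: less_induct)
  case less
  show ?case
  proof (cases "degree s = 0")
    case True
    then have "coeff s 0 \<noteq> 0" and "op_poly s A x = sc (coeff s 0) x" for x
      using less.prems(1) leading_coeff_0_iff by (fastforce simp: op_poly_def)+
    then have "op_poly s A (sc (1 / coeff s 0) y) = y" for y
      by simp
    then show ?thesis
      by (metis surjI)
  next
    case False
    then have "\<not> constant (poly s)"
      by (simp add: constant_degree)
    then obtain z where "poly s z = 0"
      using fundamental_theorem_of_algebra by blast
    then obtain t where t: "s = [:- z, 1:] * t"
      using poly_eq_0_iff_dvd by (metis dvdE)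
    with less.prems(1) have "t \<noteq> 0"
      by auto
    then have "degree t < degree s"
      unfolding t by (subst degree_mult_eq) auto
    then have "surj (op_poly t A)"
      using less.prems(2) by (intro less.hyps) (auto simp: t)
    moreover have "surj (\<lambda>x. A x - sc z x)"
      using less.prems(2)[OF \<open>poly s z = 0\<close>] by (simp add: bij_is_surj)
    moreover have "op_poly s A = (\<lambda>x. A x - sc z x) \<circ> op_poly t A"
      by (rule ext) (simp only: t op_poly_mult op_poly_linear_factor o_apply)
    ultimately show ?thesis
      using comp_surj by metis
  qed
qed

lemma op_poly_eq_0_if_annihilated:
  assumes "finite R" and annih: "\<And>x. op_poly (\<Prod>\<rho>\<in>R. [:- \<rho>, 1:]) A x = 0"
    and "\<forall>\<tau>\<in>R. poly s \<tau> = 0"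
  shows "op_poly s A x = 0"
proof -
  obtain t where "s = (\<Prod>\<rho>\<in>R. [:- \<rho>, 1:]) * t"
    using prod_linear_factors_dvd[OF assms(1,3)] by (rule dvdE)
  then show ?thesis
    by (simp add: op_poly_mult annih)
qed

end

section \<open>Spectral decomposition of observables with finite spectrum\<close>

text \<open>Adjoining the conjugates of the spectrum makes the annihilating polynomial invariant under
  conjugation of its coefficients, so it evaluates to a self-adjoint operator; its spectrum is
  contained in \<open>{0}\<close> by the spectral mapping argument of \<open>op_poly_surj\<close>, hence it vanishes.\<close>

lemma fs_observable_annihilated:
  assumes fs: "is_fs_observable sc ip A"
  defines "R \<equiv> op_spectrum sc A \<union> cnj ` op_spectrum sc A"
  shows "op_poly (\<Prod>\<rho>\<in>R. [:- \<rho>, 1:]) A x = 0"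
proof -
  have lin: "is_clinear sc A" and bnd: "is_bounded_op ip A" and sa: "selfadjoint A"
    and fin: "finite (op_spectrum sc A)"
    using fs unfolding is_fs_observable_def selfadjoint_def by auto
  define r where "r = (\<Prod>\<rho>\<in>R. [:- \<rho>, 1:])"
  have "finite R"
    unfolding R_def using fin by simp
  have r_roots: "poly r \<tau> = 0" if "\<tau> \<in> R" for \<tau>
    unfolding r_def poly_prod using \<open>finite R\<close> that by (auto intro!: prod_zero bexI[of _ \<tau>])
  have "cnj ` R = R"
    unfolding R_def by (auto simp: image_Un image_image)
  then have "map_poly cnj r = r"
    unfolding r_def using \<open>finite R\<close> by (rule map_poly_cnj_prod_linear_factors[rotated])
  then have sa_r: "selfadjoint (op_poly r A)"
    unfolding selfadjoint_def using op_poly_adjoint[OF lin sa, of r] by simp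
  show ?thesis
  proof (cases "R = {}")
    case True
    then have "bij (\<lambda>x. A x - sc \<mu> x)" for \<mu>
      unfolding R_def op_spectrum_def by blast
    moreover have "A y = 0" for y
      by (rule selfadjoint_eq_0_if_surj_shifts[OF lin bnd sa]) (use calculation in \<open>simp add: bij_is_surj\<close>)
    ultimately have "inj (\<lambda>x::'a. 0::'a)"
      by (metis (no_types, lifting) bij_is_inj diff_zero inj_on_cong sc_0_left)
    then show ?thesis
      by (simp add: inj_def)
  next
    case False
    have "op_poly r A x = 0"
    proof (rule selfadjoint_eq_0_if_surj_shifts[OF op_poly_clinear[OF lin] op_poly_bounded[OF lin bnd] sa_r])
      fix \<mu> :: complex
      assume "\<mu> \<noteq> 0"
      have "r - [:\<mu>:] \<noteq> 0"
        using False r_roots \<open>\<mu> \<noteq> 0\<close> by (metis all_not_in_conv poly_const_conv right_minus_eq)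
      moreover have "bij (\<lambda>x. A x - sc z x)" if "poly (r - [:\<mu>:]) z = 0" for z
      proof -
        have "z \<notin> R"
          using that r_roots \<open>\<mu> \<noteq> 0\<close> by auto
        then show ?thesis
          unfolding R_def op_spectrum_def by simp
      qed
      ultimately have "surj (op_poly (r - [:\<mu>:]) A)"
        by (rule op_poly_surj[OF lin])
      then show "surj (\<lambda>x. op_poly r A x - sc \<mu> x)"
        by (simp add: op_poly_diff op_poly_const)
    qed
    then show ?thesis
      unfolding r_def .
  qed
qed

lemma lagrange_projections:
  assumes lin: "is_clinear sc A" and fin: "finite R"
    and annih: "\<And>x. op_poly (\<Prod>\<rho>\<in>R. [:- \<rho>, 1:]) A x = 0"
  defines "P \<equiv> \<lambda>\<rho>. op_poly (lagrange_poly R \<rho>) A"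
  shows "(\<Sum>\<rho>\<in>R. P \<rho> x) = x"
    and "\<rho> \<in> R \<Longrightarrow> \<tau> \<in> R \<Longrightarrow> P \<rho> (P \<tau> x) = (if \<rho> = \<tau> then P \<rho> x else 0)"
    and "\<rho> \<in> R \<Longrightarrow> A (P \<rho> x) = sc \<rho> (P \<rho> x)"
proof -
  note vanish = op_poly_eq_0_if_annihilated[OF lin fin annih]
  note L = poly_lagrange_poly[OF fin]
  have "op_poly ((\<Sum>\<rho>\<in>R. lagrange_poly R \<rho>) - 1) A x = 0"
  proof (rule vanish, intro ballI)
    fix \<tau>
    assume "\<tau> \<in> R"
    then have "poly (\<Sum>\<rho>\<in>R. lagrange_poly R \<rho>) \<tau> = (\<Sum>\<rho>\<in>R. if \<tau> = \<rho> then 1 else 0)"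
      unfolding poly_sum using L by (intro sum.cong) auto
    also have "\<dots> = 1"
      using \<open>\<tau> \<in> R\<close> fin by simp
    finally show "poly ((\<Sum>\<rho>\<in>R. lagrange_poly R \<rho>) - 1) \<tau> = 0"
      by simp
  qed
  then show "(\<Sum>\<rho>\<in>R. P \<rho> x) = x"
    unfolding P_def by (simp add: op_poly_diff op_poly_sum op_poly_1)
  show "P \<rho> (P \<tau> x) = (if \<rho> = \<tau> then P \<rho> x else 0)" if "\<rho> \<in> R" "\<tau> \<in> R"
  proof -
    have "op_poly (lagrange_poly R \<rho> * lagrange_poly R \<tau> - (if \<rho> = \<tau> then lagrange_poly R \<rho> else 0)) A x = 0"
      by (rule vanish) (use that L in auto)
    then show ?thesis
      unfolding P_def by (simp add: op_poly_diff op_poly_mult[OF lin] split: if_splits)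
  qed
  show "A (P \<rho> x) = sc \<rho> (P \<rho> x)" if "\<rho> \<in> R"
  proof -
    have "op_poly ([:0, 1:] * lagrange_poly R \<rho> - smult \<rho> (lagrange_poly R \<rho>)) A x = 0"
      by (rule vanish) (use that L in auto)
    then show ?thesis
      unfolding P_def by (simp only: op_poly_diff op_poly_mult[OF lin] op_poly_X[OF lin] op_poly_smult right_minus_eq)
  qed
qed

lemma selfadjoint_eigenvectors_orthogonal:
  assumes "selfadjoint A" and "A y = sc \<rho> y" and "A z = sc \<tau> z" and "cnj \<rho> \<noteq> \<tau>"
  shows "ip y z = 0"
proof -
  have "cnj \<rho> * ip y z = \<tau> * ip y z"
    using selfadjointD[OF assms(1), of y z] assms(2,3) by simp
  then show ?thesis
    using assms(4) by simp
qed

lemma selfadjoint_if_orthogonal_resolution: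
  assumes sum: "\<And>x. (\<Sum>\<tau>\<in>I. P \<tau> x) = x" and "finite I" and "\<rho> \<in> I"
    and orth: "\<And>\<rho> \<tau> x y. \<rho> \<in> I \<Longrightarrow> \<tau> \<in> I \<Longrightarrow> \<rho> \<noteq> \<tau> \<Longrightarrow> ip (P \<rho> x) (P \<tau> y) = 0"
  shows "selfadjoint (P \<rho>)"
proof -
  have "ip (P \<rho> x) y = ip (P \<rho> x) (P \<rho> y)" and "ip x (P \<rho> y) = ip (P \<rho> x) (P \<rho> y)" for x y
  proof -
    have "ip (P \<rho> x) y = (\<Sum>\<tau>\<in>I. ip (P \<rho> x) (P \<tau> y))"
      by (metis sum ip_sum_right)
    also have "\<dots> = ip (P \<rho> x) (P \<rho> y)"
      using assms(2,3) orth by (subst sum.remove[of _ \<rho>]) (auto intro!: sum.neutral)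
    finally show "ip (P \<rho> x) y = ip (P \<rho> x) (P \<rho> y)" .
    have "ip x (P \<rho> y) = (\<Sum>\<tau>\<in>I. ip (P \<tau> x) (P \<rho> y))"
      by (metis sum ip_sum_left)
    also have "\<dots> = ip (P \<rho> x) (P \<rho> y)"
      using assms(2,3) orth by (subst sum.remove[of _ \<rho>]) (auto intro!: sum.neutral)
    finally show "ip x (P \<rho> y) = ip (P \<rho> x) (P \<rho> y)" .
  qed
  then show ?thesis
    unfolding selfadjoint_def by simp
qed

definition spectral_decomp :: "('a \<Rightarrow> 'a) \<Rightarrow> 'i set \<Rightarrow> ('i \<Rightarrow> 'a \<Rightarrow> 'a) \<Rightarrow> ('i \<Rightarrow> real) \<Rightarrow> bool" where
  "spectral_decomp A I P lam \<longleftrightarrow> finite I \<and>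
     (\<forall>i\<in>I. is_clinear sc (P i) \<and> is_bounded_op ip (P i) \<and> selfadjoint (P i)) \<and>
     (\<forall>i\<in>I. \<forall>j\<in>I. \<forall>x. P i (P j x) = (if i = j then P i x else 0)) \<and>
     (\<forall>x. (\<Sum>i\<in>I. P i x) = x) \<and>
     (\<forall>i\<in>I. \<forall>x. A (P i x) = sc (complex_of_real (lam i)) (P i x))"

lemma spectral_decompD:
  assumes "spectral_decomp A I P lam"
  shows "finite I" and "\<And>i. i \<in> I \<Longrightarrow> is_clinear sc (P i)" and "\<And>i. i \<in> I \<Longrightarrow> is_bounded_op ip (P i)"
    and "\<And>i. i \<in> I \<Longrightarrow> selfadjoint (P i)"
    and "\<And>i j x. i \<in> I \<Longrightarrow> j \<in> I \<Longrightarrow> P i (P j x) = (if i = j then P i x else 0)"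
    and "\<And>x. (\<Sum>i\<in>I. P i x) = x"
    and "\<And>i x. i \<in> I \<Longrightarrow> A (P i x) = sc (complex_of_real (lam i)) (P i x)"
  using assms unfolding spectral_decomp_def by auto

text \<open>The Lagrange projections for the non-real points of the conjugation-closed spectrum
  vanish, so only the real ones need to be kept.\<close>

lemma fs_observable_spectral_decomp:
  assumes fs: "is_fs_observable sc ip A"
  obtains I :: "complex set" and P where "spectral_decomp A I P Re"
proof -
  have lin: "is_clinear sc A" and bnd: "is_bounded_op ip A" and sa: "selfadjoint A"
    and fin: "finite (op_spectrum sc A)"
    using fs unfolding is_fs_observable_def selfadjoint_def by auto
  define R where "R = op_spectrum sc A \<union> cnj ` op_spectrum sc A"
  define P where "P \<rho> = op_poly (lagrange_poly R \<rho>) A" for \<rho>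
  define I where "I = {\<rho>\<in>R. Im \<rho> = 0}"
  have "finite R"
    unfolding R_def using fin by simp
  note proj = lagrange_projections[OF lin \<open>finite R\<close> fs_observable_annihilated[OF fs, folded R_def], folded P_def]
  have "finite I" "I \<subseteq> R"
    unfolding I_def using \<open>finite R\<close> by auto
  have real: "complex_of_real (Re \<rho>) = \<rho>" "cnj \<rho> = \<rho>" if "\<rho> \<in> I" for \<rho>
    using that unfolding I_def by (auto simp: complex_eq_iff)
  have "P \<rho> x = 0" if "\<rho> \<in> R" "\<rho> \<notin> I" for \<rho> x
  proof -
    have "cnj \<rho> \<noteq> \<rho>"
      using that unfolding I_def by (auto simp: complex_eq_iff)
    then have "ip (P \<rho> x) (P \<rho> x) = 0"
      using proj(3)[OF that(1)] by (intro selfadjoint_eigenvectors_orthogonal[OF sa]) auto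
    then show ?thesis
      by (rule ip_self_eq_0)
  qed
  then have sum: "(\<Sum>\<rho>\<in>I. P \<rho> x) = x" for x
    using proj(1)[of x] sum.mono_neutral_left[OF \<open>finite R\<close> \<open>I \<subseteq> R\<close>, of "\<lambda>\<rho>. P \<rho> x"] by auto
  have orth: "ip (P \<rho> x) (P \<tau> y) = 0" if "\<rho> \<in> I" "\<tau> \<in> I" "\<rho> \<noteq> \<tau>" for \<rho> \<tau> x y
  proof (rule selfadjoint_eigenvectors_orthogonal[OF sa])
    show "A (P \<rho> x) = sc \<rho> (P \<rho> x)" "A (P \<tau> y) = sc \<tau> (P \<tau> y)"
      using that \<open>I \<subseteq> R\<close> proj(3) by auto
    show "cnj \<rho> \<noteq> \<tau>"
      using that real by simp
  qed
  have "spectral_decomp A I P Re"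
    unfolding spectral_decomp_def
    using \<open>finite I\<close> \<open>I \<subseteq> R\<close> op_poly_clinear[OF lin] op_poly_bounded[OF lin bnd] proj(2,3) real sum
      selfadjoint_if_orthogonal_resolution[OF sum \<open>finite I\<close> _ orth]
    by (auto simp: P_def subset_iff)
  then show thesis
    using that by blast
qed

section \<open>Functional calculus on the tensor space\<close>

abbreviation V :: "('a \<Rightarrow> 'a) set" where
  "V \<equiv> tens_space sc ip"

definition rank_sum :: "('a \<times> ('a \<Rightarrow> complex)) list \<Rightarrow> 'a \<Rightarrow> 'a" where
  "rank_sum ps x = sum_list (map (\<lambda>(\<phi>, \<eta>). sc (\<eta> x) \<phi>) ps)"

lemma tens_space_iff: "X \<in> V \<longleftrightarrow> (\<exists>ps. (\<forall>(\<phi>, \<eta>)\<in>set ps. is_cfunctional sc ip \<eta>) \<and> X = rank_sum ps)"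
  unfolding tens_space_def rank_sum_def by (simp add: fun_eq_iff)

lemma rank_sum_Nil [simp]: "rank_sum [] x = 0"
  unfolding rank_sum_def by simp

lemma rank_sum_Cons [simp]: "rank_sum ((\<phi>, \<eta>) # ps) x = sc (\<eta> x) \<phi> + rank_sum ps x"
  unfolding rank_sum_def by simp

lemma rank_sum_append: "rank_sum (ps @ qs) x = rank_sum ps x + rank_sum qs x"
  unfolding rank_sum_def by simp

lemma rank_sum_sc: "rank_sum (map (\<lambda>(\<phi>, \<eta>). (sc c \<phi>, \<eta>)) ps) x = sc c (rank_sum ps x)"
  by (induction ps) (auto simp: sc_add_right mult.commute)

lemma rank_sum_comp:
  "is_clinear sc P \<Longrightarrow> rank_sum (map (\<lambda>(\<phi>, \<eta>). (P \<phi>, \<eta> \<circ> Q)) ps) x = P (rank_sum ps (Q x))"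
  by (induction ps) (auto simp: clinear_0 clinear_add clinear_sc)

lemma tens_space_zero: "(\<lambda>x. 0) \<in> V"
  unfolding tens_space_iff by (auto intro!: exI[of _ "[]"] simp: fun_eq_iff)

lemma tens_space_add:
  assumes "X \<in> V" and "Y \<in> V"
  shows "(\<lambda>x. X x + Y x) \<in> V"
proof -
  obtain ps qs where "\<forall>(\<phi>, \<eta>)\<in>set ps. is_cfunctional sc ip \<eta>" "X = rank_sum ps"
    and "\<forall>(\<phi>, \<eta>)\<in>set qs. is_cfunctional sc ip \<eta>" "Y = rank_sum qs"
    using assms unfolding tens_space_iff by blast
  then show ?thesis
    unfolding tens_space_iff by (intro exI[of _ "ps @ qs"]) (auto simp: rank_sum_append fun_eq_iff)
qed

lemma tens_space_sc:
  assumes "X \<in> V"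
  shows "(\<lambda>x. sc c (X x)) \<in> V"
proof -
  obtain ps where "\<forall>(\<phi>, \<eta>)\<in>set ps. is_cfunctional sc ip \<eta>" "X = rank_sum ps"
    using assms unfolding tens_space_iff by blast
  then show ?thesis
    unfolding tens_space_iff
    by (intro exI[of _ "map (\<lambda>(\<phi>, \<eta>). (sc c \<phi>, \<eta>)) ps"]) (auto simp: rank_sum_sc fun_eq_iff)
qed

lemma tens_space_sum_sc:
  assumes "finite K" and "\<And>k. k \<in> K \<Longrightarrow> Y k \<in> V"
  shows "(\<lambda>x. \<Sum>k\<in>K. sc (c k) (Y k x)) \<in> V"
  using assms
proof (induction K rule: finite_induct)
  case (insert k K)
  then have "(\<lambda>x. sc (c k) (Y k x) + (\<Sum>k\<in>K. sc (c k) (Y k x))) \<in> V"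
    by (intro tens_space_add tens_space_sc) auto
  then show ?case
    using insert.hyps by simp
qed (simp add: tens_space_zero)

lemma cfunctional_comp:
  assumes \<eta>: "is_cfunctional sc ip \<eta>" and lin: "is_clinear sc Q" and bnd: "is_bounded_op ip Q"
  shows "is_cfunctional sc ip (\<eta> \<circ> Q)"
proof -
  obtain K where K: "\<And>x. cmod (\<eta> x) \<le> K * N x" and "K \<ge> 0"
    using \<eta> unfolding is_cfunctional_def
    by (metis N_nonneg max.cobounded1 max.cobounded2 mult_right_mono order_trans)
  obtain L where L: "\<And>x. N (Q x) \<le> L * N x"
    using bnd unfolding is_bounded_op_def by blast
  have "cmod (\<eta> (Q x)) \<le> (K * L) * N x" for x
    using order_trans[OF K mult_left_mono[OF L \<open>K \<ge> 0\<close>]] by (simp add: mult.assoc)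
  then show ?thesis
    using \<eta> clinear_add[OF lin] clinear_sc[OF lin] unfolding is_cfunctional_def by auto
qed

lemma tens_space_comp:
  assumes "X \<in> V" and "is_clinear sc P" and "is_clinear sc Q" and "is_bounded_op ip Q"
  shows "(\<lambda>x. P (X (Q x))) \<in> V"
proof -
  obtain ps where "\<forall>(\<phi>, \<eta>)\<in>set ps. is_cfunctional sc ip \<eta>" "X = rank_sum ps"
    using assms(1) unfolding tens_space_iff by blast
  then show ?thesis
    unfolding tens_space_iff using assms(2-)
    by (intro exI[of _ "map (\<lambda>(\<phi>, \<eta>). (P \<phi>, \<eta> \<circ> Q)) ps"])
      (auto simp: rank_sum_comp fun_eq_iff intro: cfunctional_comp)
qed

lemma tens_space_clinear:
  assumes "X \<in> V"
  shows "is_clinear sc X"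
proof -
  obtain ps where ps: "\<forall>(\<phi>, \<eta>)\<in>set ps. is_cfunctional sc ip \<eta>" and X: "X = rank_sum ps"
    using assms unfolding tens_space_iff by blast
  have "rank_sum ps (x + y) = rank_sum ps x + rank_sum ps y \<and> rank_sum ps (sc c x) = sc c (rank_sum ps x)"
    for x y c
    using ps
  proof (induction ps)
    case (Cons a ps)
    obtain \<phi> \<eta> where a: "a = (\<phi>, \<eta>)"
      by (cases a)
    then have "\<eta> (x + y) = \<eta> x + \<eta> y" "\<eta> (sc c x) = c * \<eta> x"
      using Cons.prems unfolding is_cfunctional_def by auto
    then show ?case
      using Cons a by (auto simp: sc_add_left sc_add_right algebra_simps)
  qed simp
  then show ?thesis
    unfolding is_clinear_def X by blast
qed

text \<open>\<open>T\<close> acts on the tensor space as multiplication by \<open>\<mu> k\<close> on the range of the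
  \<open>k\<close>-th member of a finite family \<open>\<pi>\<close> of complementary projections.\<close>

definition tens_diagonal ::
  "'k set \<Rightarrow> ('k \<Rightarrow> ('a \<Rightarrow> 'a) \<Rightarrow> 'a \<Rightarrow> 'a) \<Rightarrow> ('k \<Rightarrow> complex) \<Rightarrow> (('a \<Rightarrow> 'a) \<Rightarrow> 'a \<Rightarrow> 'a) \<Rightarrow> bool" where
  "tens_diagonal K \<pi> \<mu> T \<longleftrightarrow> finite K \<and>
     (\<forall>k\<in>K. \<forall>X\<in>V. \<pi> k X \<in> V) \<and>
     (\<forall>X\<in>V. \<forall>x. (\<Sum>k\<in>K. \<pi> k X x) = X x) \<and>
     (\<forall>l\<in>K. \<forall>k\<in>K. \<forall>X\<in>V. \<pi> l (\<pi> k X) = (if l = k then \<pi> k X else (\<lambda>x. 0))) \<and>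
     (\<forall>l\<in>K. \<forall>(d :: 'k \<Rightarrow> complex) Y.
        \<pi> l (\<lambda>x. \<Sum>k\<in>K. sc (d k) (Y k x)) = (\<lambda>x. \<Sum>k\<in>K. sc (d k) (\<pi> l (Y k) x))) \<and>
     (\<forall>(c :: 'k \<Rightarrow> complex) Y. T (\<lambda>x. \<Sum>k\<in>K. sc (c k) (Y k x)) = (\<lambda>x. \<Sum>k\<in>K. sc (c k) (T (Y k) x))) \<and>
     (\<forall>k\<in>K. \<forall>X\<in>V. T (\<pi> k X) = (\<lambda>x. sc (\<mu> k) (\<pi> k X x)))"

context
  fixes K \<pi> \<mu> T
  assumes diag: "tens_diagonal K \<pi> \<mu> T"
begin

lemma tens_diagonal_finite: "finite K"
  and tens_diagonal_closed: "k \<in> K \<Longrightarrow> X \<in> V \<Longrightarrow> \<pi> k X \<in> V"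
  and tens_diagonal_sum: "X \<in> V \<Longrightarrow> (\<Sum>k\<in>K. \<pi> k X x) = X x"
  and tens_diagonal_orth: "l \<in> K \<Longrightarrow> k \<in> K \<Longrightarrow> X \<in> V \<Longrightarrow> \<pi> l (\<pi> k X) = (if l = k then \<pi> k X else (\<lambda>x. 0))"
  and tens_diagonal_proj_linear: "l \<in> K \<Longrightarrow> \<pi> l (\<lambda>x. \<Sum>k\<in>K. sc (d k) (Y k x)) = (\<lambda>x. \<Sum>k\<in>K. sc (d k) (\<pi> l (Y k) x))"
  and tens_diagonal_linear: "T (\<lambda>x. \<Sum>k\<in>K. sc (c k) (Y k x)) = (\<lambda>x. \<Sum>k\<in>K. sc (c k) (T (Y k) x))"
  and tens_diagonal_eigen: "k \<in> K \<Longrightarrow> X \<in> V \<Longrightarrow> T (\<pi> k X) = (\<lambda>x. sc (\<mu> k) (\<pi> k X x))"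
  using diag unfolding tens_diagonal_def by blast+

lemma tens_diagonal_power: "X \<in> V \<Longrightarrow> (T ^^ n) X = (\<lambda>x. \<Sum>k\<in>K. sc (\<mu> k ^ n) (\<pi> k X x))"
proof (induction n)
  case 0
  then show ?case
    using tens_diagonal_sum by (simp add: fun_eq_iff)
next
  case (Suc n)
  have "(T ^^ Suc n) X = (\<lambda>x. \<Sum>k\<in>K. sc (\<mu> k ^ n) (T (\<pi> k X) x))"
    using Suc by (simp add: tens_diagonal_linear)
  also have "\<dots> = (\<lambda>x. \<Sum>k\<in>K. sc (\<mu> k ^ Suc n) (\<pi> k X x))"
    using Suc.prems by (intro ext sum.cong) (simp_all add: tens_diagonal_eigen mult.commute)
  finally show ?case .
qed

lemma tens_diagonal_poly_op: "X \<in> V \<Longrightarrow> poly_op sc q T X x = (\<Sum>k\<in>K. sc (poly q (\<mu> k)) (\<pi> k X x))"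
proof -
  assume "X \<in> V"
  have "poly_op sc q T X x = (\<Sum>i\<le>degree q. \<Sum>k\<in>K. sc (coeff q i * \<mu> k ^ i) (\<pi> k X x))"
    unfolding poly_op_def tens_diagonal_power[OF \<open>X \<in> V\<close>] by (simp add: sc_sum_right)
  also have "\<dots> = (\<Sum>k\<in>K. \<Sum>i\<le>degree q. sc (coeff q i * \<mu> k ^ i) (\<pi> k X x))"
    by (rule sum.swap)
  also have "\<dots> = (\<Sum>k\<in>K. sc (poly q (\<mu> k)) (\<pi> k X x))"
    by (simp add: poly_altdef sc_sum_left)
  finally show ?thesis .
qed

lemma tens_diagonal_proj_combination:
  assumes "l \<in> K" and "Y \<in> V"
  shows "\<pi> l (\<lambda>x. \<Sum>k\<in>K. sc (d k) (\<pi> k Y x)) = (\<lambda>x. sc (d l) (\<pi> l Y x))"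
proof -
  have "\<pi> l (\<lambda>x. \<Sum>k\<in>K. sc (d k) (\<pi> k Y x)) = (\<lambda>x. \<Sum>k\<in>K. if k = l then sc (d l) (\<pi> l Y x) else 0)"
    unfolding tens_diagonal_proj_linear[OF assms(1)] using assms by (intro ext sum.cong) (auto simp: tens_diagonal_orth)
  then show ?thesis
    using tens_diagonal_finite assms(1) by simp
qed

lemma tens_diagonal_shift:
  assumes "Y \<in> V"
  shows "(\<lambda>x. T Y x - sc c (Y x)) = (\<lambda>x. \<Sum>k\<in>K. sc (\<mu> k - c) (\<pi> k Y x))"
proof -
  have "T Y = (\<lambda>x. \<Sum>k\<in>K. sc 1 (T (\<pi> k Y) x))"
    using tens_diagonal_sum[OF assms] tens_diagonal_linear[of "\<lambda>_. 1" "\<lambda>k. \<pi> k Y"] by (simp add: fun_eq_iff)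
  then show ?thesis
    using assms tens_diagonal_sum[OF assms]
    by (simp add: fun_eq_iff tens_diagonal_eigen sc_sum_right sc_diff_left sum_subtractf flip: tens_diagonal_sum)
qed

lemma tens_spectrum_subset_diagonal: "tens_spectrum sc ip T \<subseteq> \<mu> ` K"
proof
  fix c
  assume c: "c \<in> tens_spectrum sc ip T"
  show "c \<in> \<mu> ` K"
  proof (rule ccontr)
    assume "c \<notin> \<mu> ` K"
    then have nz: "\<mu> k - c \<noteq> 0" if "k \<in> K" for k
      using that by auto
    define F where "F Y = (\<lambda>x. T Y x - sc c (Y x))" for Y
    define G where "G Y = (\<lambda>x. \<Sum>k\<in>K. sc (1 / (\<mu> k - c)) (\<pi> k Y x))" for Y
    have F: "F Y = (\<lambda>x. \<Sum>k\<in>K. sc (\<mu> k - c) (\<pi> k Y x))" if "Y \<in> V" for Y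
      unfolding F_def using tens_diagonal_shift[OF that] .
    have F_V: "F Y \<in> V" and G_V: "G Y \<in> V" if "Y \<in> V" for Y
      unfolding F[OF that] G_def using that tens_diagonal_finite tens_diagonal_closed by (auto intro!: tens_space_sum_sc)
    have proj_F: "\<pi> l (F Y) = (\<lambda>x. sc (\<mu> l - c) (\<pi> l Y x))" if "Y \<in> V" "l \<in> K" for Y l
      unfolding F[OF that(1)] using that(2,1) by (rule tens_diagonal_proj_combination)
    have F_G: "F (G Y) = Y" if "Y \<in> V" for Y
    proof -
      have "\<pi> l (G Y) = (\<lambda>x. sc (1 / (\<mu> l - c)) (\<pi> l Y x))" if "l \<in> K" for l
        unfolding G_def using that \<open>Y \<in> V\<close> by (rule tens_diagonal_proj_combination)
      then show ?thesis
        unfolding F[OF G_V[OF that]] using nz tens_diagonal_sum[OF that] by (simp add: fun_eq_iff)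
    qed
    have "inj_on F V"
    proof (rule inj_onI)
      fix Y Z
      assume "Y \<in> V" "Z \<in> V" "F Y = F Z"
      then have "\<pi> l Y x = \<pi> l Z x" if "l \<in> K" for l x
        using proj_F[OF \<open>Y \<in> V\<close> that] proj_F[OF \<open>Z \<in> V\<close> that] sc_cancel[OF nz[OF that]] by metis
      then show "Y = Z"
        using tens_diagonal_sum[OF \<open>Y \<in> V\<close>] tens_diagonal_sum[OF \<open>Z \<in> V\<close>] by (metis (no_types, lifting) ext sum.cong)
    qed
    moreover have "F ` V = V"
      using F_V F_G G_V by (auto intro: image_eqI[of _ F, OF F_G[symmetric]])
    ultimately have "bij_betw F V V"
      by (rule bij_betw_imageI)
    then show False
      using c unfolding tens_spectrum_def F_def by simp
  qed
qed

lemma tens_diagonal_eigenvalue_in_spectrum: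
  assumes "k \<in> K" and "X \<in> V" and "\<pi> k X \<noteq> (\<lambda>x. 0)"
  shows "\<mu> k \<in> tens_spectrum sc ip T"
proof -
  define F where "F Y = (\<lambda>x. T Y x - sc (\<mu> k) (Y x))" for Y
  have "T (\<lambda>x. 0) = (\<lambda>x. 0)"
    using tens_diagonal_linear[of "\<lambda>k. 0" "\<lambda>k x. 0"] by simp
  then have "F (\<lambda>x. 0) = F (\<pi> k X)"
    unfolding F_def tens_diagonal_eigen[OF assms(1,2)] by simp
  then have "\<not> inj_on F V"
    using tens_space_zero tens_diagonal_closed[OF assms(1,2)] assms(3) unfolding inj_on_def by metis
  then show ?thesis
    unfolding tens_spectrum_def F_def by (auto simp: bij_betw_def)
qed

lemma fcalc_diagonal:
  assumes "X \<in> V"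
  shows "fcalc sc ip f T X = (\<lambda>x. \<Sum>k\<in>K. sc (f (\<mu> k)) (\<pi> k X x))"
proof
  fix x
  define S where "S = tens_spectrum sc ip T"
  have "finite S"
    unfolding S_def using tens_spectrum_subset_diagonal tens_diagonal_finite finite_surj by blast
  have "fcalc sc ip f T X x = (\<Sum>k\<in>K. \<Sum>l\<in>S. sc (f l * poly (lagrange_poly S l) (\<mu> k)) (\<pi> k X x))"
    unfolding fcalc_def S_def[symmetric] tens_diagonal_poly_op[OF assms]
    by (simp add: sc_sum_right sum.swap[of _ S])
  also have "\<dots> = (\<Sum>k\<in>K. sc (f (\<mu> k)) (\<pi> k X x))"
  proof (rule sum.cong[OF refl])
    fix k
    assume "k \<in> K"
    show "(\<Sum>l\<in>S. sc (f l * poly (lagrange_poly S l) (\<mu> k)) (\<pi> k X x)) = sc (f (\<mu> k)) (\<pi> k X x)"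
    proof (cases "\<pi> k X = (\<lambda>x. 0)")
      case False
      then have "\<mu> k \<in> S"
        unfolding S_def using tens_diagonal_eigenvalue_in_spectrum[OF \<open>k \<in> K\<close> assms] by blast
      then have "(\<Sum>l\<in>S. sc (f l * poly (lagrange_poly S l) (\<mu> k)) (\<pi> k X x)) =
          (\<Sum>l\<in>S. if l = \<mu> k then sc (f (\<mu> k)) (\<pi> k X x) else 0)"
        using poly_lagrange_poly[OF \<open>finite S\<close> _ \<open>\<mu> k \<in> S\<close>] by (intro sum.cong) auto
      then show ?thesis
        using \<open>finite S\<close> \<open>\<mu> k \<in> S\<close> by simp
    qed simp
  qed
  finally show "fcalc sc ip f T X x = (\<Sum>k\<in>K. sc (f (\<mu> k)) (\<pi> k X x))" .
qed

end

section \<open>The operator \<open>A \<otimes> I - I \<otimes> A\<^sup>T\<close>\<close>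

abbreviation tens_commutator :: "('a \<Rightarrow> 'a) \<Rightarrow> ('a \<Rightarrow> 'a) \<Rightarrow> 'a \<Rightarrow> 'a" where
  "tens_commutator A \<equiv> \<lambda>Y y. tens_op A id Y y - tens_op id A Y y"

lemma tens_commutator_apply: "tens_commutator A = (\<lambda>Y y. A (Y y) - Y (A y))"
  by (simp add: tens_op_def fun_eq_iff)

context
  fixes A I P lam
  assumes sd: "spectral_decomp A I P lam" and lin: "is_clinear sc A"
begin

lemma spectral_decomp_proj_commute:
  assumes "j \<in> I"
  shows "P j (A x) = sc (complex_of_real (lam j)) (P j x)"
proof -
  note D = spectral_decompD[OF sd]
  have "P j (A x) = (\<Sum>i\<in>I. sc (complex_of_real (lam i)) (P j (P i x)))"
    by (subst D(6)[of x, symmetric])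
      (simp add: clinear_sum[OF lin] clinear_sum[OF D(2)[OF assms]] D(7) clinear_sc[OF D(2)[OF assms]])
  also have "\<dots> = (\<Sum>i\<in>I. if i = j then sc (complex_of_real (lam j)) (P j x) else 0)"
    using assms D(5) by (intro sum.cong) auto
  also have "\<dots> = sc (complex_of_real (lam j)) (P j x)"
    using assms D(1) by simp
  finally show ?thesis .
qed

lemma commutator_tens_diagonal:
  "tens_diagonal (I \<times> I) (\<lambda>k X x. P (fst k) (X (P (snd k) x)))
     (\<lambda>k. complex_of_real (lam (fst k) - lam (snd k))) (tens_commutator A)"
proof -
  note D = spectral_decompD[OF sd]
  have sum: "(\<Sum>k\<in>I \<times> I. P (fst k) (Y (P (snd k) x))) = Y x" if "Y \<in> V" for Y x
  proof -
    have "(\<Sum>k\<in>I \<times> I. P (fst k) (Y (P (snd k) x))) = (\<Sum>i\<in>I. \<Sum>j\<in>I. P i (Y (P j x)))"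
      by (simp add: sum.cartesian_product split_def)
    also have "\<dots> = (\<Sum>i\<in>I. P i (Y (\<Sum>j\<in>I. P j x)))"
      by (intro sum.cong) (auto simp: clinear_sum[OF tens_space_clinear[OF that]] clinear_sum[OF D(2)])
    finally show ?thesis
      by (simp add: D(6))
  qed
  have orth: "P (fst l) (P (fst k) (Y (P (snd k) (P (snd l) x)))) =
      (if l = k then P (fst k) (Y (P (snd k) x)) else 0)"
    if "l \<in> I \<times> I" "k \<in> I \<times> I" "Y \<in> V" for l k Y x
    using that D(5) clinear_0[OF tens_space_clinear[OF that(3)]] clinear_0[OF D(2)]
    by (cases l, cases k) (auto simp: D(5))
  have eigen: "A (P i (Y (P j y))) - P i (Y (P j (A y))) =
      sc (complex_of_real (lam i - lam j)) (P i (Y (P j y)))"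
    if "i \<in> I" "j \<in> I" "Y \<in> V" for i j Y y
  proof -
    have "P i (Y (P j (A y))) = sc (complex_of_real (lam j)) (P i (Y (P j y)))"
      unfolding spectral_decomp_proj_commute[OF that(2)]
      by (simp add: clinear_sc[OF tens_space_clinear[OF that(3)]] clinear_sc[OF D(2)[OF that(1)]])
    then show ?thesis
      by (simp add: D(7)[OF that(1)] sc_diff_left)
  qed
  have comb: "A (\<Sum>k\<in>I \<times> I. sc (c k) (Y k y)) - (\<Sum>k\<in>I \<times> I. sc (c k) (Y k (A y))) =
      (\<Sum>k\<in>I \<times> I. sc (c k) (A (Y k y) - Y k (A y)))" for c Y y
    by (simp add: clinear_sum[OF lin] clinear_sc[OF lin] sc_diff_right sum_subtractf)
  have proj_comb: "P (fst l) (\<Sum>k\<in>I \<times> I. sc (d k) (Y k (P (snd l) x))) =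
      (\<Sum>k\<in>I \<times> I. sc (d k) (P (fst l) (Y k (P (snd l) x))))" if "l \<in> I \<times> I" for l d Y x
    using that by (auto simp: clinear_sum[OF D(2)] clinear_sc[OF D(2)])
  show ?thesis
    unfolding tens_diagonal_def tens_commutator_apply
  proof (intro conjI ballI allI)
    show "finite (I \<times> I)"
      using D(1) by simp
    show "(\<lambda>x. P (fst k) (X (P (snd k) x))) \<in> V" if "k \<in> I \<times> I" "X \<in> V" for k X
      using that tens_space_comp[OF that(2) D(2)[of "fst k"] D(2)[of "snd k"] D(3)[of "snd k"]] by auto
    show "(\<Sum>k\<in>I \<times> I. P (fst k) (X (P (snd k) x))) = X x" if "X \<in> V" for X x
      using sum[OF that] .
    show "(\<lambda>x. P (fst l) (P (fst k) (X (P (snd k) (P (snd l) x))))) =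
        (if l = k then (\<lambda>x. P (fst k) (X (P (snd k) x))) else (\<lambda>x. 0))"
      if "l \<in> I \<times> I" "k \<in> I \<times> I" "X \<in> V" for l k X
      using orth[OF that] by (simp add: fun_eq_iff)
    show "(\<lambda>x. P (fst l) (\<Sum>k\<in>I \<times> I. sc (d k) (Y k (P (snd l) x)))) =
        (\<lambda>x. \<Sum>k\<in>I \<times> I. sc (d k) (P (fst l) (Y k (P (snd l) x))))" if "l \<in> I \<times> I" for l d Y
      using proj_comb[OF that] by simp
    show "(\<lambda>y. A (\<Sum>k\<in>I \<times> I. sc (c k) (Y k y)) - (\<Sum>k\<in>I \<times> I. sc (c k) (Y k (A y)))) =
        (\<lambda>x. \<Sum>k\<in>I \<times> I. sc (c k) (A (Y k x) - Y k (A x)))" for c Y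
      using comb by simp
    show "(\<lambda>y. A (P (fst k) (X (P (snd k) y))) - P (fst k) (X (P (snd k) (A y)))) =
        (\<lambda>x. sc (complex_of_real (lam (fst k) - lam (snd k))) (P (fst k) (X (P (snd k) x))))"
      if "k \<in> I \<times> I" "X \<in> V" for k X
      using that eigen by (auto simp: fun_eq_iff)
  qed
qed

lemma fcalc_commutator:
  assumes "X \<in> V"
  shows "fcalc sc ip f (tens_commutator A) X =
    (\<lambda>x. \<Sum>k\<in>I \<times> I. sc (f (complex_of_real (lam (fst k) - lam (snd k)))) (P (fst k) (X (P (snd k) x))))"
  using fcalc_diagonal[OF commutator_tens_diagonal assms] .

lemma spectral_decomp_spectrum_subset: "op_spectrum sc A \<subseteq> (\<lambda>i. complex_of_real (lam i)) ` I"
proof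
  fix \<mu>
  assume \<mu>: "\<mu> \<in> op_spectrum sc A"
  show "\<mu> \<in> (\<lambda>i. complex_of_real (lam i)) ` I"
  proof (rule ccontr)
    assume "\<mu> \<notin> (\<lambda>i. complex_of_real (lam i)) ` I"
    then have nz: "complex_of_real (lam i) - \<mu> \<noteq> 0" if "i \<in> I" for i
      using that by auto
    note D = spectral_decompD[OF sd]
    have P_shift: "P i (A x - sc \<mu> x) = sc (complex_of_real (lam i) - \<mu>) (P i x)" if "i \<in> I" for i x
      using that by (simp add: clinear_diff[OF D(2)] clinear_sc[OF D(2)] spectral_decomp_proj_commute sc_diff_left)
    have "inj (\<lambda>x. A x - sc \<mu> x)"
    proof (rule injI)
      fix x y
      assume "A x - sc \<mu> x = A y - sc \<mu> y"
      then have "P i x = P i y" if "i \<in> I" for i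
        using P_shift[OF that, of x] P_shift[OF that, of y] sc_cancel[OF nz[OF that]] by metis
      then show "x = y"
        using D(6)[of x] D(6)[of y] by (metis (no_types, lifting) sum.cong)
    qed
    moreover have "surj (\<lambda>x. A x - sc \<mu> x)"
    proof (rule surjI)
      fix y
      define x where "x = (\<Sum>i\<in>I. sc (1 / (complex_of_real (lam i) - \<mu>)) (P i y))"
      have "A x - sc \<mu> x = (\<Sum>i\<in>I. sc (1 / (complex_of_real (lam i) - \<mu>) * complex_of_real (lam i)) (P i y))
          - (\<Sum>i\<in>I. sc (\<mu> * (1 / (complex_of_real (lam i) - \<mu>))) (P i y))"
        unfolding x_def by (simp add: clinear_sum[OF lin] clinear_sc[OF lin] D(7) sc_sum_right)
      also have "\<dots> = (\<Sum>i\<in>I. sc (1 / (complex_of_real (lam i) - \<mu>) * complex_of_real (lam i)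
          - \<mu> * (1 / (complex_of_real (lam i) - \<mu>))) (P i y))"
        by (simp add: sc_diff_left sum_subtractf)
      also have "\<dots> = (\<Sum>i\<in>I. P i y)"
      proof (rule sum.cong[OF refl])
        fix i
        assume "i \<in> I"
        let ?l = "complex_of_real (lam i)"
        have "1 / (?l - \<mu>) * ?l - \<mu> * (1 / (?l - \<mu>)) = ?l * (1 / (?l - \<mu>)) - \<mu> * (1 / (?l - \<mu>))"
          by (simp only: mult.commute)
        also have "\<dots> = (?l - \<mu>) * (1 / (?l - \<mu>))"
          by (rule left_diff_distrib[symmetric])
        also have "\<dots> = 1"
          using nz[OF \<open>i \<in> I\<close>] by simp
        finally show "sc (1 / (?l - \<mu>) * ?l - \<mu> * (1 / (?l - \<mu>))) (P i y) = P i y"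
          by simp
      qed
      also have "\<dots> = y"
        by (rule D(6))
      finally show "A (SOME x. A x - sc \<mu> x = y) - sc \<mu> (SOME x. A x - sc \<mu> x = y) = y"
        by (rule someI)
    qed
    ultimately show False
      using \<mu> unfolding op_spectrum_def by (simp add: bij_def)
  qed
qed

end

lemma clinear_sum_ops: "(\<And>i. i \<in> J \<Longrightarrow> is_clinear sc (P i)) \<Longrightarrow> is_clinear sc (\<lambda>x. \<Sum>i\<in>J. P i x)"
  unfolding is_clinear_def by (auto simp: sum.distrib sc_sum_right)

lemma bounded_sum_ops:
  assumes "finite J" and "\<And>i. i \<in> J \<Longrightarrow> is_bounded_op ip (P i)"
  shows "is_bounded_op ip (\<lambda>x. \<Sum>i\<in>J. P i x)"
  using assms
proof (induction J rule: finite_induct)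
  case (insert a J)
  obtain K1 K2 where K1: "\<And>x. N (P a x) \<le> K1 * N x" and K2: "\<And>x. N (\<Sum>i\<in>J. P i x) \<le> K2 * N x"
    using insert unfolding is_bounded_op_def by (metis insertCI)
  have "N (\<Sum>i\<in>insert a J. P i x) \<le> (K1 + K2) * N x" for x
    using insert.hyps N_triangle[of "P a x" "\<Sum>i\<in>J. P i x"] K1[of x] K2[of x] by (simp add: algebra_simps)
  then show ?case
    unfolding is_bounded_op_def by blast
qed (auto simp: is_bounded_op_def intro!: exI[of _ 0])

lemma selfadjoint_sum_ops: "(\<And>i. i \<in> J \<Longrightarrow> selfadjoint (P i)) \<Longrightarrow> selfadjoint (\<lambda>x. \<Sum>i\<in>J. P i x)"
  unfolding selfadjoint_def by (simp add: ip_sum_left ip_sum_right)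

lemma spectral_decomp_partial_sum:
  assumes sd: "spectral_decomp A I P lam" and "J \<subseteq> I"
  shows "is_clinear sc (\<lambda>x. \<Sum>i\<in>J. P i x)" and "is_bounded_op ip (\<lambda>x. \<Sum>i\<in>J. P i x)"
    and "selfadjoint (\<lambda>x. \<Sum>i\<in>J. P i x)" and "\<And>x. (\<Sum>i\<in>J. P i (\<Sum>j\<in>J. P j x)) = (\<Sum>i\<in>J. P i x)"
    and "\<And>x. x - (\<Sum>i\<in>J. P i x) = (\<Sum>i\<in>I - J. P i x)"
proof -
  note D = spectral_decompD[OF sd]
  have "finite J"
    using \<open>J \<subseteq> I\<close> D(1) finite_subset by blast
  show "is_clinear sc (\<lambda>x. \<Sum>i\<in>J. P i x)" "is_bounded_op ip (\<lambda>x. \<Sum>i\<in>J. P i x)"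
    "selfadjoint (\<lambda>x. \<Sum>i\<in>J. P i x)"
    using \<open>J \<subseteq> I\<close> \<open>finite J\<close> D(2-4) by (auto intro!: clinear_sum_ops bounded_sum_ops selfadjoint_sum_ops)
  show "(\<Sum>i\<in>J. P i (\<Sum>j\<in>J. P j x)) = (\<Sum>i\<in>J. P i x)" for x
  proof -
    have "P i (\<Sum>j\<in>J. P j x) = (\<Sum>j\<in>J. if i = j then P i x else 0)" if "i \<in> J" for i
    proof -
      have "i \<in> I"
        using that \<open>J \<subseteq> I\<close> by auto
      then show ?thesis
        unfolding clinear_sum[OF D(2)[OF \<open>i \<in> I\<close>]] using \<open>J \<subseteq> I\<close> by (intro sum.cong) (auto simp: D(5))
    qed
    then have "(\<Sum>i\<in>J. P i (\<Sum>j\<in>J. P j x)) = (\<Sum>i\<in>J. \<Sum>j\<in>J. if i = j then P i x else 0)"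
      by simp
    then show ?thesis
      using \<open>finite J\<close> by simp
  qed
  show "x - (\<Sum>i\<in>J. P i x) = (\<Sum>i\<in>I - J. P i x)" for x
    using sum.subset_diff[OF \<open>J \<subseteq> I\<close> D(1), of "\<lambda>i. P i x"] D(6)[of x] by (simp add: algebra_simps)
qed

lemma projection_commutator_sum:
  assumes sd: "spectral_decomp A I P lam" and "J \<subseteq> I" and "X \<in> V"
  defines "Q \<equiv> \<lambda>x. \<Sum>i\<in>J. P i x"
  shows "Q (X (x - Q x)) + (X (Q x) - Q (X (Q x))) =
    (\<Sum>k\<in>I \<times> I. if (fst k \<in> J) \<noteq> (snd k \<in> J) then P (fst k) (X (P (snd k) x)) else 0)"
proof -
  note D = spectral_decompD[OF sd]
  have "finite J"
    using \<open>J \<subseteq> I\<close> D(1) finite_subset by blast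
  define f where "f k = P (fst k) (X (P (snd k) x))" for k
  have compl: "y - Q y = (\<Sum>i\<in>I - J. P i y)" for y
    unfolding Q_def by (rule spectral_decomp_partial_sum(5)[OF sd \<open>J \<subseteq> I\<close>])
  have P_sum: "P a (sum g S) = (\<Sum>b\<in>S. P a (g b))" if "a \<in> I" for a g S
    by (rule clinear_sum[OF D(2)[OF that]])
  have "Q (X (x - Q x)) = (\<Sum>k\<in>J \<times> (I - J). f k)" and "X (Q x) - Q (X (Q x)) = (\<Sum>k\<in>(I - J) \<times> J. f k)"
    unfolding compl unfolding Q_def f_def clinear_sum[OF tens_space_clinear[OF \<open>X \<in> V\<close>]] sum.cartesian_product'
    using \<open>J \<subseteq> I\<close> P_sum by (auto intro!: sum.cong)
  moreover have "{k\<in>I \<times> I. (fst k \<in> J) \<noteq> (snd k \<in> J)} = J \<times> (I - J) \<union> (I - J) \<times> J"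
    using \<open>J \<subseteq> I\<close> by auto
  moreover have "(\<Sum>k\<in>J \<times> (I - J) \<union> (I - J) \<times> J. f k) = (\<Sum>k\<in>J \<times> (I - J). f k) + (\<Sum>k\<in>(I - J) \<times> J. f k)"
    using D(1) \<open>finite J\<close> by (intro sum.union_disjoint) auto
  ultimately show ?thesis
    using D(1) by (simp add: sum.inter_filter[symmetric] f_def)
qed

lemma projection_spectral_decomp:
  assumes lin: "is_clinear sc Q" and bnd: "is_bounded_op ip Q" and sa: "selfadjoint Q"
    and idem: "\<And>x. Q (Q x) = Q x"
  shows "spectral_decomp (\<lambda>x. sc (complex_of_real c) (Q x)) (UNIV :: bool set)
    (\<lambda>b. if b then Q else (\<lambda>x. x - Q x)) (\<lambda>b. if b then c else 0)"
proof -
  have lin_R: "is_clinear sc (\<lambda>x. x - Q x)"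
    using lin unfolding is_clinear_def by (auto simp: sc_diff_right)
  have bnd_R: "is_bounded_op ip (\<lambda>x. x - Q x)"
  proof -
    obtain K where K: "\<And>x. N (Q x) \<le> K * N x"
      using bnd unfolding is_bounded_op_def by blast
    have "N (x - Q x) \<le> (1 + K) * N x" for x
      using N_triangle[of x "- Q x"] K[of x] by (simp add: N_minus algebra_simps)
    then show ?thesis
      unfolding is_bounded_op_def by blast
  qed
  have sa_R: "selfadjoint (\<lambda>x. x - Q x)"
    using sa unfolding selfadjoint_def by (simp add: ip_diff_left ip_diff_right)
  have QR: "Q (x - Q x) = 0" and RQ: "Q x - Q (Q x) = 0" and RR: "(x - Q x) - Q (x - Q x) = x - Q x" for x
    by (simp_all add: clinear_diff[OF lin] idem)
  have bools: "(UNIV :: bool set) = {True, False}"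
    by auto
  show ?thesis
    unfolding spectral_decomp_def bools using lin bnd sa lin_R bnd_R sa_R QR RQ RR idem
    by (auto simp: clinear_sc[OF lin] clinear_diff[OF lin])
qed

lemma scaled_projection_fs_observable:
  assumes lin: "is_clinear sc Q" and bnd: "is_bounded_op ip Q" and sa: "selfadjoint Q"
    and idem: "\<And>x. Q (Q x) = Q x"
  shows "is_fs_observable sc ip (\<lambda>x. sc (complex_of_real c) (Q x))"
proof -
  let ?B = "\<lambda>x. sc (complex_of_real c) (Q x)"
  have lin_B: "is_clinear sc ?B"
    using lin unfolding is_clinear_def by (auto simp: sc_add_right mult.commute)
  moreover have "is_bounded_op ip ?B"
  proof -
    obtain K where K: "\<And>x. N (Q x) \<le> K * N x"
      using bnd unfolding is_bounded_op_def by blast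
    have "N (?B x) \<le> (\<bar>c\<bar> * K) * N x" for x
      using mult_left_mono[OF K[of x] abs_ge_zero[of c]] by (simp add: N_sc mult.assoc)
    then show ?thesis
      unfolding is_bounded_op_def by blast
  qed
  moreover have "op_spectrum sc ?B \<subseteq> (\<lambda>b. complex_of_real (if b then c else 0)) ` UNIV"
    by (rule spectral_decomp_spectrum_subset[OF projection_spectral_decomp[OF lin bnd sa idem] lin_B])
  then have "finite (op_spectrum sc ?B)"
    by (rule finite_subset) simp
  ultimately show ?thesis
    using sa unfolding is_fs_observable_def selfadjoint_def by simp
qed

abbreviation abs_pow :: "real \<Rightarrow> complex \<Rightarrow> complex" where
  "abs_pow p \<equiv> \<lambda>l. complex_of_real (cmod l powr p)"

lemma C_op_concat: "C_op sc ip p (concat Ass) X x = sum_list (map (\<lambda>As. C_op sc ip p As X x) Ass)"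
  unfolding C_op_def by (induction Ass) auto

lemma C_op_sorted_list: "finite L \<Longrightarrow> C_op sc ip p (map B (sorted_list_of_set L)) X x =
    (\<Sum>t\<in>L. fcalc sc ip (abs_pow p) (tens_commutator (B t)) X x)"
  unfolding C_op_def by (simp add: sum_list_distinct_conv_sum_set)

lemma fcalc_abs_commutator:
  assumes sd: "spectral_decomp A I P lam" and lin: "is_clinear sc A" and "X \<in> V"
  shows "fcalc sc ip (abs_pow 1) (tens_commutator A) X x =
    (\<Sum>k\<in>I \<times> I. sc (complex_of_real \<bar>lam (fst k) - lam (snd k)\<bar>) (P (fst k) (X (P (snd k) x))))"
  by (simp add: fcalc_commutator[OF sd lin \<open>X \<in> V\<close>] flip: of_real_diff)

lemma fcalc_power_commutator_projection:
  assumes lin: "is_clinear sc Q" and bnd: "is_bounded_op ip Q" and sa: "selfadjoint Q"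
    and idem: "\<And>x. Q (Q x) = Q x" and "g \<ge> 0" and "p > 0" and "X \<in> V"
  shows "fcalc sc ip (abs_pow p) (tens_commutator (\<lambda>x. sc (complex_of_real (g powr (1 / p))) (Q x))) X x =
    sc (complex_of_real g) (Q (X (x - Q x)) + (X (Q x) - Q (X (Q x))))"
proof -
  have lin_B: "is_clinear sc (\<lambda>x. sc (complex_of_real (g powr (1 / p))) (Q x))"
    using lin unfolding is_clinear_def by (auto simp: sc_add_right mult.commute)
  have "\<bar>g powr (1 / p)\<bar> powr p = g" "\<bar>- (g powr (1 / p))\<bar> powr p = g"
    using \<open>g \<ge> 0\<close> \<open>p > 0\<close> by (simp_all add: powr_powr)
  moreover have bool_pairs: "(UNIV :: bool set) \<times> UNIV = {(True, True), (True, False), (False, True), (False, False)}"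
    by auto
  ultimately show ?thesis
    unfolding fcalc_commutator[OF projection_spectral_decomp[OF lin bnd sa idem] lin_B \<open>X \<in> V\<close>] bool_pairs
    by (simp add: sc_add_right)
qed

text \<open>The layer-cake identity behind the theorem: \<open>\<bar>\<lambda>\<^sub>i - \<lambda>\<^sub>j\<bar>\<close> is the sum of the gaps of the
  spectrum at the thresholds \<open>t\<close> separating \<open>\<lambda>\<^sub>i\<close> from \<open>\<lambda>\<^sub>j\<close>, and the pairs separated by \<open>t\<close>
  are exactly those picked out by the spectral projection \<open>Q t\<close> of \<open>(-\<infinity>, t]\<close>.\<close>

lemma sum_gap_commutator_projections:
  assumes sd: "spectral_decomp A I P lam" and "X \<in> V"
  defines "Q t x \<equiv> \<Sum>i\<in>{i\<in>I. lam i \<le> t}. P i x"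
  shows "(\<Sum>t\<in>lam ` I. sc (complex_of_real (gap (lam ` I) t)) (Q t (X (x - Q t x)) + (X (Q t x) - Q t (X (Q t x))))) =
    (\<Sum>k\<in>I \<times> I. sc (complex_of_real \<bar>lam (fst k) - lam (snd k)\<bar>) (P (fst k) (X (P (snd k) x))))"
proof -
  define L where "L = lam ` I"
  have "finite L"
    unfolding L_def using spectral_decompD(1)[OF sd] by simp
  define v where "v k = P (fst k) (X (P (snd k) x))" for k
  define crosses where "crosses t k = (if (lam (fst k) \<le> t) \<noteq> (lam (snd k) \<le> t) then 1 else (0::real))" for t k
  have "Q t (X (x - Q t x)) + (X (Q t x) - Q t (X (Q t x))) = (\<Sum>k\<in>I \<times> I. sc (complex_of_real (crosses t k)) (v k))" for t
  proof -
    have "Q t (X (x - Q t x)) + (X (Q t x) - Q t (X (Q t x))) =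
        (\<Sum>k\<in>I \<times> I. if (fst k \<in> {i\<in>I. lam i \<le> t}) \<noteq> (snd k \<in> {i\<in>I. lam i \<le> t}) then v k else 0)"
      unfolding Q_def v_def by (rule projection_commutator_sum[OF sd _ \<open>X \<in> V\<close>]) auto
    also have "\<dots> = (\<Sum>k\<in>I \<times> I. sc (complex_of_real (crosses t k)) (v k))"
      unfolding crosses_def by (intro sum.cong) auto
    finally show ?thesis .
  qed
  then have "(\<Sum>t\<in>L. sc (complex_of_real (gap L t)) (Q t (X (x - Q t x)) + (X (Q t x) - Q t (X (Q t x))))) =
      (\<Sum>k\<in>I \<times> I. sc (complex_of_real (\<Sum>t\<in>L. gap L t * crosses t k)) (v k))"
    by (simp add: sc_sum_right sc_sum_left sum.swap[of _ L])
  also have "\<dots> = (\<Sum>k\<in>I \<times> I. sc (complex_of_real \<bar>lam (fst k) - lam (snd k)\<bar>) (v k))"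
  proof (rule sum.cong[OF refl])
    fix k
    assume "k \<in> I \<times> I"
    then have "(\<Sum>t\<in>L. gap L t * crosses t k) = \<bar>lam (fst k) - lam (snd k)\<bar>"
      unfolding crosses_def L_def by (intro sum_gap_crossing) (auto simp: \<open>finite L\<close>[unfolded L_def])
    then show "sc (complex_of_real (\<Sum>t\<in>L. gap L t * crosses t k)) (v k) =
        sc (complex_of_real \<bar>lam (fst k) - lam (snd k)\<bar>) (v k)"
      by simp
  qed
  finally show ?thesis
    unfolding L_def v_def .
qed

lemma commutator_abs_eq_C_op_power:
  assumes fs: "is_fs_observable sc ip A" and "p > 0"
  obtains Bs where "\<forall>B\<in>set Bs. is_fs_observable sc ip B"
    and "\<And>X x. X \<in> V \<Longrightarrow> C_op sc ip p Bs X x = fcalc sc ip (abs_pow 1) (tens_commutator A) X x"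
proof -
  have lin: "is_clinear sc A"
    using fs unfolding is_fs_observable_def by blast
  obtain I :: "complex set" and P where sd: "spectral_decomp A I P Re"
    using fs_observable_spectral_decomp[OF fs] by blast
  define L where "L = Re ` I"
  have "finite L"
    unfolding L_def using spectral_decompD(1)[OF sd] by simp
  define Q where "Q t x = (\<Sum>i\<in>{i\<in>I. Re i \<le> t}. P i x)" for t x
  define B where "B t x = sc (complex_of_real (gap L t powr (1 / p))) (Q t x)" for t x
  have "{i\<in>I. Re i \<le> t} \<subseteq> I" for t
    by auto
  note Q = spectral_decomp_partial_sum[OF sd this, folded Q_def]
  show thesis
  proof (rule that)
    show "\<forall>B\<in>set (map B (sorted_list_of_set L)). is_fs_observable sc ip B"
      unfolding B_def using scaled_projection_fs_observable[OF Q(1-4)] by auto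
    show "C_op sc ip p (map B (sorted_list_of_set L)) X x = fcalc sc ip (abs_pow 1) (tens_commutator A) X x"
      if "X \<in> V" for X x
      unfolding C_op_sorted_list[OF \<open>finite L\<close>] B_def
      using fcalc_power_commutator_projection[OF Q(1-4) gap_nonneg[OF \<open>finite L\<close>] \<open>p > 0\<close> that]
        sum_gap_commutator_projections[OF sd that, folded Q_def L_def] fcalc_abs_commutator[OF sd lin that]
      by simp
  qed
qed

lemma C_set_1_subset:
  assumes "p > 0"
  shows "C_set sc ip 1 \<subseteq> C_set sc ip p"
proof
  fix Z
  assume "Z \<in> C_set sc ip 1"
  then obtain As where Z: "Z = restrict (C_op sc ip 1 As) V" and As: "\<forall>A\<in>set As. is_fs_observable sc ip A"
    unfolding C_set_def by blast
  have "\<forall>A\<in>set As. \<exists>Bs. (\<forall>B\<in>set Bs. is_fs_observable sc ip B) \<and>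
      (\<forall>X\<in>V. \<forall>x. C_op sc ip p Bs X x = fcalc sc ip (abs_pow 1) (tens_commutator A) X x)"
  proof
    fix A
    assume "A \<in> set As"
    then obtain Bs where "\<forall>B\<in>set Bs. is_fs_observable sc ip B"
      "\<And>X x. X \<in> V \<Longrightarrow> C_op sc ip p Bs X x = fcalc sc ip (abs_pow 1) (tens_commutator A) X x"
      using commutator_abs_eq_C_op_power[OF _ assms] As by blast
    then show "\<exists>Bs. (\<forall>B\<in>set Bs. is_fs_observable sc ip B) \<and>
        (\<forall>X\<in>V. \<forall>x. C_op sc ip p Bs X x = fcalc sc ip (abs_pow 1) (tens_commutator A) X x)"
      by blast
  qed
  from bchoice[OF this] obtain Bs where Bs: "\<forall>A\<in>set As. (\<forall>B\<in>set (Bs A). is_fs_observable sc ip B) \<and>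
      (\<forall>X\<in>V. \<forall>x. C_op sc ip p (Bs A) X x = fcalc sc ip (abs_pow 1) (tens_commutator A) X x)"
    by blast
  have "C_op sc ip p (concat (map Bs As)) X x = C_op sc ip 1 As X x" if "X \<in> V" for X x
    unfolding C_op_concat map_map o_def
    using Bs that by (simp add: C_op_def cong: map_cong)
  then have "Z = restrict (C_op sc ip p (concat (map Bs As))) V"
    unfolding Z by (auto simp: restrict_def fun_eq_iff)
  then show "Z \<in> C_set sc ip p"
    unfolding C_set_def using Bs by fastforce
qed

end

theorem proposition4p1:
  fixes sc :: "complex \<Rightarrow> 'a::ab_group_add \<Rightarrow> 'a"
    and ip :: "'a \<Rightarrow> 'a \<Rightarrow> complex"
    and p :: real
  assumes "is_complex_hilbert sc ip"
    and "is_separable ip"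
    and "0 < p"
  shows "C_set sc ip 1 \<subseteq> C_set sc ip p"
proof -
  interpret complex_hilbert sc ip
    using assms(1) by unfold_locales
  show ?thesis
    using C_set_1_subset[OF assms(3)] .
qed

end
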